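(* Let $B_{\rho} = B_{\rho}(x_0)$ be a ball of ${\bf R}^n$, $\omega \in A_2(K_1)$, $(\nu,\omega) \in B_{2,q}^1(K_2)$ for some $q > 2$, $\nu \in A_{\infty}$, and let $\sigma_1\in(1,q)$ and $\kappa\in(1,\sigma_1]$ be as in the weighted interpolation inequality $\frac{1}{\upsilon (B_{\rho})} \int_A |u|^{2\kappa} \upsilon \, dx \leqslant \gamma_1^{2} \rho^2 \big( \frac{1}{\nu (B_{\rho})} \int_A |u|^{2} \nu \, dx \big)^{\kappa -1} \big( \frac{1}{\omega (B_{\rho})} \int_{B_{\rho}} |D u|^2 \omega \, dx \big)$ ($A\subset B_\rho$, $u$ Lipschitz with support in $B_\rho$ or null mean, $\upsilon\in\{\nu,\omega\}$). Consider moreover $s_1, s_2 \in (0,T)$ and a family of open sets $A(t)$, $t \in (s_1,s_2)$, such that $E = \cup_{t \in (s_1,s_2)} A(t)$ is an open subset of $B_{\rho} \times (s_1, s_2)$. For every $u \in C^0([s_1,s_2]; L^2(B_{\rho},\nu)) \cap L^2(s_1,s_2; W^{1,2}_0(B_{\rho}, \nu, \omega))$ it holds \begin{align*} \frac{1}{\upsilon (B_{\rho})} \iint_{E} |u|^{2\kappa} (x,t) \upsilon (x) \, dx dt \leqslant & \gamma_1^{2} \, \rho^2 \, \left( \frac{1}{\nu (B_{\rho})} \right)^{\kappa-1} \Big( \sup_{s_1 < t < s_2} \int_{A(t)} |u|^{2}(x,t) \nu (x) \, dx \Big)^{\kappa-1} \cdot \\ & \cdot \frac{1}{\omega (B_{\rho})}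 \int_{s_1}^{s_2}\!\! \int_{B_{\rho}} |D u|^2 (x,t) \, \omega (x) \, dx dt \end{align*} where the inequality holds both with $\upsilon = \nu$ and $\upsilon = \omega$.
   Context: A weight is a function $\eta>0$ a.e. with $\eta\in L^1_{\rm loc}({\bf R}^n)$; $\eta(B)=\int_B\eta\,dx$. $\omega \in A_2(K_1)$ means $\big(\frac{1}{|B|}\int_B \omega\big)^{1/2}\big(\frac{1}{|B|}\int_B \omega^{-1}\big)^{1/2}\leqslant K_1$ for every ball $B$; $A_\infty=\bigcup_{p>1}A_p$. $(\nu,\omega)\in B^1_{2,q}(K_2)$ means $\left(\frac{|B_r(\bar{x})|}{|B_\rho(\bar{x})|}\right)^{1/n}\left(\frac{\nu(B_r(\bar{x}))}{\nu(B_\rho(\bar{x}))}\right)^{1/q}\left(\frac{\omega(B_r(\bar{x}))}{\omega(B_\rho(\bar{x}))}\right)^{-1/2}\leqslant K_2$ for concentric balls with $0<r<\rho$. $\gamma_1$ is the constant in the weighted Sobolev–Poincaré inequality $\big[\frac{1}{\nu(B_\rho)}\int_{B_\rho}|u|^q\nu\big]^{1/q}\leqslant\gamma_1\rho\big[\frac{1}{\omega(B_\rho)}\int_{B_\rho}|Du|^2\omega\big]^{1/2}$. $W^{1,2}_0(B_\rho,\nu,\omega)$ is the closure of $C^1_c(B_\rho)$ in $\{u\in L^2(B_\rho,\nu)\cap W^{1,1}_{\rm loc}: D_iu\in L^2(B_\rho,\omega)\}$. *)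

theory Defs
  imports "HOL-Analysis.Analysis"
begin

definition weight :: "('a::euclidean_space \<Rightarrow> real) \<Rightarrow> bool" where
  "weight \<eta> \<longleftrightarrow> (AE x in lebesgue. 0 < \<eta> x) \<and>
     (\<forall>K. compact K \<longrightarrow> \<eta> absolutely_integrable_on K)"

definition wmeas :: "('a::euclidean_space \<Rightarrow> real) \<Rightarrow> 'a set \<Rightarrow> real" where
  "wmeas \<eta> S = integral S \<eta>"

text \<open>Muckenhoupt class A_2(K), as in the paper (with square roots).\<close>
definition A2 :: "real \<Rightarrow> ('a::euclidean_space \<Rightarrow> real) \<Rightarrow> bool" where
  "A2 K \<eta> \<longleftrightarrow> weight \<eta> \<and>
     (\<forall>x r. 0 < r \<longrightarrow>
        (\<lambda>y. 1 / \<eta> y) integrable_on ball x r \<and>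
        sqrt (wmeas \<eta> (ball x r) / measure lebesgue (ball x r)) *
        sqrt (integral (ball x r) (\<lambda>y. 1 / \<eta> y) / measure lebesgue (ball x r)) \<le> K)"

definition Ap :: "real \<Rightarrow> real \<Rightarrow> ('a::euclidean_space \<Rightarrow> real) \<Rightarrow> bool" where
  "Ap p K \<eta> \<longleftrightarrow> weight \<eta> \<and>
     (\<forall>x r. 0 < r \<longrightarrow>
        (\<lambda>y. \<eta> y powr (- 1 / (p - 1))) integrable_on ball x r \<and>
        (wmeas \<eta> (ball x r) / measure lebesgue (ball x r)) *
        (integral (ball x r) (\<lambda>y. \<eta> y powr (- 1 / (p - 1))) / measure lebesgue (ball x r))
            powr (p - 1) \<le> K)"

definition A_infty :: "('a::euclidean_space \<Rightarrow> real) \<Rightarrow> bool" where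
  "A_infty \<eta> \<longleftrightarrow> (\<exists>p K. 1 < p \<and> Ap p K \<eta>)"

definition B12q :: "real \<Rightarrow> real \<Rightarrow> ('a::euclidean_space \<Rightarrow> real) \<Rightarrow> ('a \<Rightarrow> real) \<Rightarrow> bool" where
  "B12q q K \<nu> \<omega> \<longleftrightarrow> weight \<nu> \<and> weight \<omega> \<and>
     (\<forall>x r \<rho>. 0 < r \<and> r < \<rho> \<longrightarrow>
        (measure lebesgue (ball x r) / measure lebesgue (ball x \<rho>)) powr (1 / real DIM('a)) *
        (wmeas \<nu> (ball x r) / wmeas \<nu> (ball x \<rho>)) powr (1 / q) *
        (wmeas \<omega> (ball x r) / wmeas \<omega> (ball x \<rho>)) powr (- 1 / 2) \<le> K)"

definition C1c :: "'a::euclidean_space set \<Rightarrow> ('a \<Rightarrow> real) \<Rightarrow> ('a \<Rightarrow> 'a) \<Rightarrow> bool" where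
  "C1c B \<phi> G \<longleftrightarrow> (\<forall>x. (\<phi> has_derivative (\<lambda>h. G x \<bullet> h)) (at x)) \<and> continuous_on UNIV G \<and>
     compact (closure {x. \<phi> x \<noteq> 0}) \<and> closure {x. \<phi> x \<noteq> 0} \<subseteq> B"

definition L2w :: "'a::euclidean_space set \<Rightarrow> ('a \<Rightarrow> real) \<Rightarrow> ('a \<Rightarrow> real) \<Rightarrow> bool" where
  "L2w B \<eta> u \<longleftrightarrow> u measurable_on B \<and> (\<lambda>x. (u x)\<^sup>2 * \<eta> x) integrable_on B"

definition weak_grad :: "'a::euclidean_space set \<Rightarrow> ('a \<Rightarrow> real) \<Rightarrow> ('a \<Rightarrow> 'a) \<Rightarrow> bool" where
  "weak_grad B u Du \<longleftrightarrow>
     (\<forall>K. compact K \<and> K \<subseteq> B \<longrightarrow> u absolutely_integrable_on K \<and> Du absolutely_integrable_on K) \<and>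
     (\<forall>\<phi> G. C1c B \<phi> G \<longrightarrow>
        (\<forall>i\<in>Basis. integral B (\<lambda>x. u x * (G x \<bullet> i)) = - integral B (\<lambda>x. (Du x \<bullet> i) * \<phi> x)))"

definition W12 :: "'a::euclidean_space set \<Rightarrow> ('a \<Rightarrow> real) \<Rightarrow> ('a \<Rightarrow> real) \<Rightarrow> ('a \<Rightarrow> real) \<Rightarrow> ('a \<Rightarrow> 'a) \<Rightarrow> bool" where
  "W12 B \<nu> \<omega> u Du \<longleftrightarrow> L2w B \<nu> u \<and> weak_grad B u Du \<and> Du measurable_on B \<and>
     (\<lambda>x. (norm (Du x))\<^sup>2 * \<omega> x) integrable_on B"

definition W120 :: "'a::euclidean_space set \<Rightarrow> ('a \<Rightarrow> real) \<Rightarrow> ('a \<Rightarrow> real) \<Rightarrow> ('a \<Rightarrow> real) \<Rightarrow> ('a \<Rightarrow> 'a) \<Rightarrow> bool" where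
  "W120 B \<nu> \<omega> u Du \<longleftrightarrow> W12 B \<nu> \<omega> u Du \<and>
     (\<exists>\<phi> G. (\<forall>k::nat. C1c B (\<phi> k) (G k)) \<and>
        (\<lambda>k. integral B (\<lambda>x. (\<phi> k x - u x)\<^sup>2 * \<nu> x)) \<longlonglongrightarrow> 0 \<and>
        (\<lambda>k. integral B (\<lambda>x. (norm (G k x - Du x))\<^sup>2 * \<omega> x)) \<longlonglongrightarrow> 0)"

definition par_space :: "real \<Rightarrow> real \<Rightarrow> 'a::euclidean_space set \<Rightarrow> ('a \<Rightarrow> real) \<Rightarrow> ('a \<Rightarrow> real)
    \<Rightarrow> ('a \<Rightarrow> real \<Rightarrow> real) \<Rightarrow> ('a \<Rightarrow> real \<Rightarrow> 'a) \<Rightarrow> bool" where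
  "par_space s1 s2 B \<nu> \<omega> u Du \<longleftrightarrow>
     (\<forall>t\<in>{s1..s2}. L2w B \<nu> (\<lambda>x. u x t)) \<and>
     (\<forall>t\<in>{s1..s2}. ((\<lambda>s. integral B (\<lambda>x. (u x s - u x t)\<^sup>2 * \<nu> x)) \<longlongrightarrow> 0) (at t within {s1..s2})) \<and>
     (AE t in lebesgue. t \<in> {s1<..<s2} \<longrightarrow> W120 B \<nu> \<omega> (\<lambda>x. u x t) (\<lambda>x. Du x t)) \<and>
     (\<lambda>(x, t). u x t) measurable_on (B \<times> {s1<..<s2}) \<and>
     (\<lambda>(x, t). Du x t) measurable_on (B \<times> {s1<..<s2}) \<and>
     (\<lambda>(x, t). (norm (Du x t))\<^sup>2 * \<omega> x) integrable_on (B \<times> {s1<..<s2})"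

end

theory Submission
  imports Defs
begin

text \<open>
  For almost every time \<open>t\<close> the slice \<open>u(\<cdot>, t)\<close> lies in \<open>W\<^sup>1\<^sup>,\<^sup>2\<^sub>0(B\<^sub>\<rho>, \<nu>, \<omega>)\<close>.
  Approximating it by \<open>C\<^sup>1\<^sub>c\<close> functions, which converge in \<open>L\<^sup>2(\<nu>)\<close>, with gradients in
  \<open>L\<^sup>2(\<omega>)\<close> and (along a subsequence) almost everywhere, Fatou's lemma carries the interpolation
  inequality over to the slice, with \<open>A(t)\<close> as the set of integration. Replacing the \<open>\<nu>\<close>-mass
  of \<open>u(\<cdot>, t)\<close> on \<open>A(t)\<close> by its supremum over \<open>t\<close> leaves a fixed multiple of
  \<open>\<integral>\<^sub>B |Du(\<cdot>, t)|\<^sup>2 \<omega>\<close> on the right, and Tonelli's theorem integrates the slice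
  inequalities over \<open>t\<close>. The supremum is finite because \<open>t \<mapsto> \<integral>\<^sub>B u(\<cdot>, t)\<^sup>2 \<nu>\<close> is
  continuous on the compact interval \<open>[s\<^sub>1, s\<^sub>2]\<close>.
\<close>

section \<open>Nonnegative integrands: Henstock--Kurzweil versus Lebesgue\<close>

lemma absolutely_integrable_on_nonneg_AE:
  fixes f :: "'b::euclidean_space \<Rightarrow> real"
  assumes f: "f integrable_on S" and nonneg: "AE x in lebesgue. x \<in> S \<longrightarrow> 0 \<le> f x"
  shows "f absolutely_integrable_on S"
proof -
  obtain N where N: "N \<in> null_sets lebesgue" "\<And>x. x \<notin> N \<Longrightarrow> x \<in> S \<Longrightarrow> 0 \<le> f x"
    using AE_E3[OF nonneg] by auto
  have "negligible N" using N by (simp add: negligible_iff_null_sets)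
  then have "(\<lambda>x. norm (f x)) integrable_on S"
    by (rule integrable_spike[OF f]) (use N in auto)
  then show ?thesis using f absolutely_integrable_on_def by blast
qed

lemma integral_nonneg_AE_on:
  fixes f :: "'b::euclidean_space \<Rightarrow> real"
  assumes "AE x in lebesgue. x \<in> S \<longrightarrow> 0 \<le> f x"
  shows "0 \<le> integral S f"
proof -
  obtain N where N: "N \<in> null_sets lebesgue" "\<And>x. x \<notin> N \<Longrightarrow> x \<in> S \<Longrightarrow> 0 \<le> f x"
    using AE_E3[OF assms] by auto
  have "negligible N" using N by (simp add: negligible_iff_null_sets)
  then have "integral S f = integral S (\<lambda>x. max 0 (f x))"
    by (rule integral_spike) (use N in auto)
  also have "0 \<le> \<dots>"
    by (cases "(\<lambda>x. max 0 (f x)) integrable_on S")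
      (auto intro: integral_nonneg simp: not_integrable_integral)
  finally show ?thesis .
qed

lemma nn_integral_indicator_eq_integral:
  fixes f :: "'b::euclidean_space \<Rightarrow> real"
  assumes f: "f integrable_on S" and S: "S \<in> sets lebesgue"
    and nonneg: "AE x in lebesgue. x \<in> S \<longrightarrow> 0 \<le> f x"
  shows "(\<integral>\<^sup>+x. ennreal (indicator S x * f x) \<partial>lebesgue) = ennreal (integral S f)"
proof -
  have ai: "f absolutely_integrable_on S"
    by (rule absolutely_integrable_on_nonneg_AE[OF f nonneg])
  then have "integrable lebesgue (\<lambda>x. indicator S x *\<^sub>R f x)"
    by (simp add: set_integrable_def)
  then have "(\<integral>\<^sup>+x. ennreal (indicator S x *\<^sub>R f x) \<partial>lebesgue)
      = ennreal (\<integral>x. indicator S x *\<^sub>R f x \<partial>lebesgue)"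
    by (rule nn_integral_eq_integral) (use nonneg in \<open>auto simp: indicator_def\<close>)
  then show ?thesis
    using set_lebesgue_integral_eq_integral(2)[OF ai] by (simp add: set_lebesgue_integral_def)
qed

lemma integrable_on_if_nn_integral_finite:
  fixes f :: "'b::euclidean_space \<Rightarrow> real"
  assumes f: "f \<in> borel_measurable (lebesgue_on S)" and S: "S \<in> sets lebesgue"
    and nonneg: "AE x in lebesgue. x \<in> S \<longrightarrow> 0 \<le> f x"
    and finite: "(\<integral>\<^sup>+x. ennreal (indicator S x * f x) \<partial>lebesgue) < \<infinity>"
  shows "f integrable_on S"
proof -
  have "integrable lebesgue (\<lambda>x. if x \<in> S then f x else 0)"
  proof (rule integrableI_bounded)
    show "(\<lambda>x. if x \<in> S then f x else 0) \<in> borel_measurable lebesgue"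
      by (rule borel_measurable_if_I[OF f S])
    have "(\<integral>\<^sup>+x. ennreal (norm (if x \<in> S then f x else 0)) \<partial>lebesgue)
        = (\<integral>\<^sup>+x. ennreal (indicator S x * f x) \<partial>lebesgue)"
      by (rule nn_integral_cong_AE) (use nonneg in \<open>auto simp: indicator_def\<close>)
    then show "(\<integral>\<^sup>+x. ennreal (norm (if x \<in> S then f x else 0)) \<partial>lebesgue) < \<infinity>"
      using finite by simp
  qed
  then have "(\<lambda>x. if x \<in> S then f x else 0) integrable_on UNIV"
    by (rule integrable_on_lebesgue)
  then show ?thesis by (simp add: integrable_restrict_UNIV)
qed

lemma absolutely_integrable_on_iff_integrable_lebesgue_on:
  fixes f :: "'b::euclidean_space \<Rightarrow> 'c::euclidean_space"
  assumes "S \<in> sets lebesgue"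
  shows "f absolutely_integrable_on S \<longleftrightarrow> integrable (lebesgue_on S) f"
  using assms by (simp add: set_integrable_def integrable_restrict_space)

lemma integrable_lebesgue_on_nonneg_AE:
  fixes f :: "'b::euclidean_space \<Rightarrow> real"
  assumes "f integrable_on S" "AE x in lebesgue. x \<in> S \<longrightarrow> 0 \<le> f x" "S \<in> sets lebesgue"
  shows "integrable (lebesgue_on S) f"
  using absolutely_integrable_on_nonneg_AE[OF assms(1,2)] assms(3)
  by (simp add: absolutely_integrable_on_iff_integrable_lebesgue_on)

lemma integral_subset_le_nonneg_AE:
  fixes h :: "'b::euclidean_space \<Rightarrow> real"
  assumes h: "h integrable_on B" and nonneg: "AE x in lebesgue. x \<in> B \<longrightarrow> 0 \<le> h x"
    and A: "A \<in> sets lebesgue" "A \<subseteq> B" and B: "B \<in> sets lebesgue"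
  shows "integral A h \<le> integral B h"
proof -
  have ai: "h absolutely_integrable_on B"
    by (rule absolutely_integrable_on_nonneg_AE[OF h nonneg])
  have "h absolutely_integrable_on A"
    by (rule set_integrable_subset[OF ai A])
  then have "ennreal (integral A h) = (\<integral>\<^sup>+x. ennreal (indicator A x * h x) \<partial>lebesgue)"
    using A nonneg
    by (intro nn_integral_indicator_eq_integral[symmetric])
      (auto simp: absolutely_integrable_on_def elim: eventually_mono)
  also have "\<dots> \<le> (\<integral>\<^sup>+x. ennreal (indicator B x * h x) \<partial>lebesgue)"
    using nonneg A(2) by (intro nn_integral_mono_AE) (auto simp: indicator_def elim!: eventually_mono)
  also have "\<dots> = ennreal (integral B h)"
    by (rule nn_integral_indicator_eq_integral[OF h B nonneg])
  finally show ?thesis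
    using integral_nonneg_AE_on[OF nonneg] by simp
qed

lemma AE_lebesgue_on:
  assumes "AE x in lebesgue. P x" "S \<in> sets lebesgue"
  shows "AE x in lebesgue_on S. P x"
  using assms by (subst AE_restrict_space_iff) (auto elim: eventually_mono)

lemma open_imp_sets_lebesgue: "open (S :: 'b::euclidean_space set) \<Longrightarrow> S \<in> sets lebesgue"
  by (metis borel_open sets_completionI_sets sets_lborel)

lemma borel_measurable_ennreal_indicator_mult:
  fixes h :: "'b::euclidean_space \<Rightarrow> real"
  assumes "h \<in> borel_measurable (lebesgue_on S)" "S \<in> sets lebesgue"
  shows "(\<lambda>x. ennreal (indicator S x * h x)) \<in> borel_measurable lebesgue"
proof -
  have "(\<lambda>x. if x \<in> S then h x else 0) \<in> borel_measurable lebesgue"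
    by (rule borel_measurable_if_I[OF assms])
  moreover have "(\<lambda>x. if x \<in> S then h x else 0) = (\<lambda>x. indicator S x * h x)"
    by (auto simp: indicator_def)
  ultimately show ?thesis by simp
qed

section \<open>Integration over space-time by time slices\<close>

lemma AE_lebesgue_fst:
  assumes "AE x in (lebesgue :: 'a::euclidean_space measure). P x"
  shows "AE z in (lebesgue :: ('a \<times> real) measure). P (fst z)"
proof -
  have "AE x in (lborel :: 'a measure). P x" using assms by (simp add: AE_completion_iff)
  then obtain N where N: "N \<in> null_sets (lborel :: 'a measure)" "\<And>x. x \<notin> N \<Longrightarrow> P x"
    using AE_E3 by (metis space_borel space_lborel UNIV_I DiffI)
  have "N \<times> UNIV \<in> null_sets (lborel \<Otimes>\<^sub>M (lborel :: real measure))"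
    by (rule lborel.times_in_null_sets1) (use N in auto)
  then have "N \<times> (UNIV::real set) \<in> null_sets (lborel :: ('a \<times> real) measure)"
    by (simp add: lborel_prod)
  then have "AE z in (lborel :: ('a \<times> real) measure). z \<notin> N \<times> UNIV"
    by (rule AE_not_in)
  then have "AE z in (lborel :: ('a \<times> real) measure). P (fst z)"
    by eventually_elim (use N in \<open>auto simp: mem_Times_iff\<close>)
  then show ?thesis by (rule AE_completion)
qed

lemma borel_measurable_lebesgue_fst:
  fixes f :: "'a::euclidean_space \<Rightarrow> real"
  assumes f: "f \<in> borel_measurable lebesgue"
  shows "(\<lambda>z. f (fst z)) \<in> borel_measurable (lebesgue :: ('a \<times> real) measure)"
proof -
  obtain g where g: "g \<in> borel_measurable lborel" "AE x in lborel. f x = g x"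
    using completion_ex_borel_measurable_real[OF f] by blast
  have "AE x in lebesgue. g x = f x" using g(2) by (auto intro: AE_completion elim: eventually_mono)
  then have ae: "AE z in (lebesgue :: ('a \<times> real) measure). g (fst z) = f (fst z)"
    by (rule AE_lebesgue_fst)
  have "g \<in> borel_measurable borel" using g(1) by simp
  then have "(\<lambda>z. g (fst z)) \<in> borel_measurable (borel :: ('a \<times> real) measure)"
    by (simp add: borel_prod[symmetric])
  then have "(\<lambda>z. g (fst z)) \<in> borel_measurable (lebesgue :: ('a \<times> real) measure)"
    by (metis measurable_completion sets_lborel measurable_cong_sets)
  then show ?thesis using ae by (rule borel_measurable_AE)
qed

lemma borel_measurable_lebesgue_on_fst:
  fixes f :: "'a::euclidean_space \<Rightarrow> real"
  assumes f: "f \<in> borel_measurable (lebesgue_on B)" and B: "B \<in> sets lebesgue"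
  shows "(\<lambda>z. f (fst z)) \<in> borel_measurable (lebesgue_on (B \<times> (I :: real set)))"
proof -
  have "(\<lambda>x. if x \<in> B then f x else 0) \<in> borel_measurable lebesgue"
    by (rule borel_measurable_if_I[OF f B])
  then have "(\<lambda>z. if fst z \<in> B then f (fst z) else 0) \<in> borel_measurable (lebesgue_on (B \<times> I))"
    by (intro measurable_restrict_space1 borel_measurable_lebesgue_fst)
  then show ?thesis
    by (rule measurable_cong[THEN iffD1, rotated]) (auto simp: space_restrict_space)
qed

lemma nn_integral_lebesgue_prod:
  fixes f :: "'a::euclidean_space \<times> real \<Rightarrow> ennreal"
  assumes f: "f \<in> borel_measurable lebesgue"
  shows "integral\<^sup>N lebesgue f = (\<integral>\<^sup>+t. (\<integral>\<^sup>+x. f (x, t) \<partial>lebesgue) \<partial>lborel)"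
proof -
  obtain g where g: "g \<in> borel_measurable lborel" "AE z in lborel. f z = g z"
    using completion_ex_borel_measurable[of f lborel] f by auto
  obtain N where N: "N \<in> sets lborel" "emeasure lborel N = 0" "\<And>z. z \<notin> N \<Longrightarrow> f z = g z"
    using g(2) by (auto elim!: AE_E) (metis (mono_tags, lifting) mem_Collect_eq subsetD)
  have gp: "g \<in> borel_measurable (lborel \<Otimes>\<^sub>M lborel)" using g(1) by (simp add: lborel_prod)
  have "integral\<^sup>N lebesgue f = integral\<^sup>N lborel g"
    by (simp add: nn_integral_completion nn_integral_cong_AE[OF g(2)])
  also have "\<dots> = integral\<^sup>N (lborel \<Otimes>\<^sub>M lborel) g" by (simp add: lborel_prod)
  also have "\<dots> = (\<integral>\<^sup>+t. (\<integral>\<^sup>+x. g (x, t) \<partial>lborel) \<partial>lborel)"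
    by (rule lborel_pair.nn_integral_snd[OF gp, symmetric])
  also have "\<dots> = (\<integral>\<^sup>+t. (\<integral>\<^sup>+x. f (x, t) \<partial>lebesgue) \<partial>lborel)"
  proof (rule nn_integral_cong_AE)
    have Nm: "N \<in> sets (lborel \<Otimes>\<^sub>M lborel)" by (subst lborel_prod) (rule N(1))
    have "N \<in> null_sets (lborel \<Otimes>\<^sub>M lborel)"
      by (subst lborel_prod) (use N in \<open>simp add: null_sets_def\<close>)
    then have "AE z in lborel \<Otimes>\<^sub>M lborel. z \<notin> N" by (rule AE_not_in)
    moreover have meas: "{z \<in> space (lborel \<Otimes>\<^sub>M lborel). (fst z, snd z) \<notin> N} \<in> sets (lborel \<Otimes>\<^sub>M lborel)"
    proof -
      have "{z \<in> space (lborel \<Otimes>\<^sub>M lborel). (fst z, snd z) \<notin> N} = space (lborel \<Otimes>\<^sub>M lborel) - N"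
        by auto
      then show ?thesis using sets.compl_sets[OF Nm] by (simp only:)
    qed
    ultimately have "AE x in lborel. AE t in lborel. (x, t) \<notin> N"
      using lborel_pair.AE_pair_iff[OF meas] by simp
    then have "AE t in lborel. AE x in lborel. (x, t) \<notin> N"
      using lborel_pair.AE_commute[OF meas] by simp
    then show "AE t in lborel. (\<integral>\<^sup>+x. g (x, t) \<partial>lborel) = (\<integral>\<^sup>+x. f (x, t) \<partial>lebesgue)"
    proof eventually_elim
      case (elim t)
      have "(\<integral>\<^sup>+x. g (x, t) \<partial>lborel) = (\<integral>\<^sup>+x. g (x, t) \<partial>lebesgue)"
        by (simp add: nn_integral_completion)
      also have "\<dots> = (\<integral>\<^sup>+x. f (x, t) \<partial>lebesgue)"
        by (rule nn_integral_cong_AE) (use AE_completion[OF elim] N(3) in \<open>auto elim: eventually_mono\<close>)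
      finally show ?case .
    qed
  qed
  finally show ?thesis .
qed

lemma integral_le_by_slices:
  fixes f g :: "'a::euclidean_space \<times> real \<Rightarrow> real"
  assumes E: "E \<in> sets lebesgue" and F: "F \<in> sets lebesgue"
    and f: "f \<in> borel_measurable (lebesgue_on E)" and f_nonneg: "AE z in lebesgue. z \<in> E \<longrightarrow> 0 \<le> f z"
    and g: "g integrable_on F" and g_nonneg: "AE z in lebesgue. z \<in> F \<longrightarrow> 0 \<le> g z"
    and slices: "AE t in lborel. (\<integral>\<^sup>+x. ennreal (indicator E (x, t) * f (x, t)) \<partial>lebesgue)
                   \<le> (\<integral>\<^sup>+x. ennreal (indicator F (x, t) * g (x, t)) \<partial>lebesgue)"
  shows "f integrable_on E" and "integral E f \<le> integral F g"
proof -
  have "g \<in> borel_measurable (lebesgue_on F)"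
    using g F by (simp add: integrable_imp_measurable measurable_on_iff_borel_measurable)
  then have "(\<lambda>z. ennreal (indicator F z * g z)) \<in> borel_measurable lebesgue"
    by (rule borel_measurable_ennreal_indicator_mult[OF _ F])
  have "(\<integral>\<^sup>+z. ennreal (indicator E z * f z) \<partial>lebesgue)
      = (\<integral>\<^sup>+t. (\<integral>\<^sup>+x. ennreal (indicator E (x, t) * f (x, t)) \<partial>lebesgue) \<partial>lborel)"
    by (rule nn_integral_lebesgue_prod[OF borel_measurable_ennreal_indicator_mult[OF f E]])
  also have "\<dots> \<le> (\<integral>\<^sup>+t. (\<integral>\<^sup>+x. ennreal (indicator F (x, t) * g (x, t)) \<partial>lebesgue) \<partial>lborel)"
    by (rule nn_integral_mono_AE[OF slices])
  also have "\<dots> = (\<integral>\<^sup>+z. ennreal (indicator F z * g z) \<partial>lebesgue)"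
    by (rule nn_integral_lebesgue_prod[symmetric]) fact
  also have "\<dots> = ennreal (integral F g)"
    by (rule nn_integral_indicator_eq_integral[OF g F g_nonneg])
  finally have bound: "(\<integral>\<^sup>+z. ennreal (indicator E z * f z) \<partial>lebesgue) \<le> ennreal (integral F g)" .
  show f_int: "f integrable_on E"
    by (rule integrable_on_if_nn_integral_finite[OF f E f_nonneg])
      (use le_less_trans[OF bound ennreal_less_top] in simp)
  have "ennreal (integral E f) \<le> ennreal (integral F g)"
    using bound nn_integral_indicator_eq_integral[OF f_int E f_nonneg] by simp
  then show "integral E f \<le> integral F g"
    using integral_nonneg_AE_on[OF g_nonneg] by simp
qed

section \<open>Convergence in weighted L2\<close>

lemma sq_norm_weight_diff_bound:
  fixes a b :: "'b::real_normed_vector" and d w :: real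
  assumes d: "0 < d" and w: "0 \<le> w"
  shows "\<bar>(norm a)\<^sup>2 * w - (norm b)\<^sup>2 * w\<bar> \<le> (1 + 1/d) * ((norm (a - b))\<^sup>2 * w) + d * ((norm b)\<^sup>2 * w)"
proof -
  let ?x = "norm (a - b)" and ?y = "norm b"
  have "(norm a)\<^sup>2 - (norm b)\<^sup>2 = (norm a - norm b) * (norm a + norm b)"
    by (simp add: power2_eq_square algebra_simps)
  then have "\<bar>(norm a)\<^sup>2 - (norm b)\<^sup>2\<bar> = \<bar>norm a - norm b\<bar> * (norm a + norm b)"
    by (simp add: abs_mult)
  also have "\<dots> \<le> ?x * (?x + 2 * ?y)"
    using norm_triangle_ineq3[of a b] norm_triangle_ineq[of "a - b" b] by (intro mult_mono) auto
  also have "\<dots> = ?x\<^sup>2 + 2 * ?x * ?y" by (simp add: power2_eq_square algebra_simps)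
  also have "2 * ?x * ?y \<le> ?x\<^sup>2 / d + d * ?y\<^sup>2"
  proof -
    have "0 \<le> (?x - d * ?y)\<^sup>2 / d" using d by simp
    also have "\<dots> = ?x\<^sup>2 / d - 2 * ?x * ?y + d * ?y\<^sup>2"
      using d by (simp add: power2_eq_square field_simps)
    finally show ?thesis by simp
  qed
  finally have "\<bar>(norm a)\<^sup>2 - (norm b)\<^sup>2\<bar> \<le> (1 + 1/d) * ?x\<^sup>2 + d * ?y\<^sup>2"
    by (simp add: field_simps)
  then have "\<bar>(norm a)\<^sup>2 - (norm b)\<^sup>2\<bar> * w \<le> ((1 + 1/d) * ?x\<^sup>2 + d * ?y\<^sup>2) * w"
    using w by (rule mult_right_mono)
  moreover have "\<bar>(norm a)\<^sup>2 * w - (norm b)\<^sup>2 * w\<bar> = \<bar>(norm a)\<^sup>2 - (norm b)\<^sup>2\<bar> * w"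
    using w by (simp add: abs_mult flip: left_diff_distrib)
  ultimately show ?thesis by (simp add: algebra_simps)
qed

lemma tendsto_integral_sq_norm_weight:
  fixes f :: "'i \<Rightarrow> 'x \<Rightarrow> 'b::real_normed_vector"
  assumes w: "AE x in M. 0 \<le> w x"
    and g: "integrable M (\<lambda>x. (norm (g x))\<^sup>2 * w x)"
    and f_g: "\<forall>\<^sub>F k in F. integrable M (\<lambda>x. (norm (f k x - g x))\<^sup>2 * w x)"
    and f: "\<forall>\<^sub>F k in F. integrable M (\<lambda>x. (norm (f k x))\<^sup>2 * w x)"
    and lim: "((\<lambda>k. \<integral>x. (norm (f k x - g x))\<^sup>2 * w x \<partial>M) \<longlongrightarrow> 0) F"
  shows "((\<lambda>k. \<integral>x. (norm (f k x))\<^sup>2 * w x \<partial>M) \<longlongrightarrow> (\<integral>x. (norm (g x))\<^sup>2 * w x \<partial>M)) F"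
proof (rule tendstoI)
  fix e :: real assume e: "0 < e"
  define Cg where "Cg = (\<integral>x. (norm (g x))\<^sup>2 * w x \<partial>M)"
  have "0 \<le> Cg" unfolding Cg_def
    by (rule integral_nonneg_AE) (use w in auto)
  define d where "d = e / (2 * (Cg + 1))"
  have d: "0 < d" using e \<open>0 \<le> Cg\<close> by (simp add: d_def)
  have dCg: "d * Cg < e / 2"
  proof -
    have "d * Cg = e * Cg / (2 * (Cg + 1))" by (simp add: d_def)
    also have "\<dots> < e / 2" using e \<open>0 \<le> Cg\<close> by (simp add: field_simps)
    finally show ?thesis .
  qed
  define e2 where "e2 = e / (2 * (1 + 1/d))"
  have e2: "0 < e2" using e d by (simp add: e2_def add_pos_pos)
  have "\<forall>\<^sub>F k in F. dist (\<integral>x. (norm (f k x))\<^sup>2 * w x \<partial>M) Cg < e"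
    using tendstoD[OF lim e2] f_g f
  proof eventually_elim
    case (elim k)
    define D where "D = (\<integral>x. (norm (f k x - g x))\<^sup>2 * w x \<partial>M)"
    have "D < e2" using elim(1) by (simp add: D_def)
    have small: "(1 + 1/d) * D < e / 2"
    proof -
      have "(1 + 1/d) * D < (1 + 1/d) * e2"
        using \<open>D < e2\<close> d by (intro mult_strict_left_mono) (auto intro: add_pos_pos)
      also have "\<dots> = e / 2"
      proof -
        have "0 < 1/d" using d by simp
        then have "1 + 1/d \<noteq> 0" by linarith
        then show ?thesis by (simp add: e2_def field_simps)
      qed
      finally show ?thesis .
    qed
    have "dist (\<integral>x. (norm (f k x))\<^sup>2 * w x \<partial>M) Cg
        = \<bar>\<integral>x. (norm (f k x))\<^sup>2 * w x - (norm (g x))\<^sup>2 * w x \<partial>M\<bar>"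
      using elim(3) g by (simp add: dist_real_def Cg_def)
    also have "\<dots> \<le> (\<integral>x. \<bar>(norm (f k x))\<^sup>2 * w x - (norm (g x))\<^sup>2 * w x\<bar> \<partial>M)"
      by (rule integral_abs_bound)
    also have "\<dots> \<le> (\<integral>x. (1 + 1/d) * ((norm (f k x - g x))\<^sup>2 * w x) + d * ((norm (g x))\<^sup>2 * w x) \<partial>M)"
    proof (rule integral_mono_AE)
      show "AE x in M. \<bar>(norm (f k x))\<^sup>2 * w x - (norm (g x))\<^sup>2 * w x\<bar>
          \<le> (1 + 1/d) * ((norm (f k x - g x))\<^sup>2 * w x) + d * ((norm (g x))\<^sup>2 * w x)"
        using w by eventually_elim (rule sq_norm_weight_diff_bound[OF d])
    qed (use elim g in auto)
    also have "\<dots> = (1 + 1/d) * D + d * Cg"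
      using elim(2) g by (simp add: D_def Cg_def)
    also have "\<dots> < e" using small dCg by linarith
    finally show ?case .
  qed
  then show "\<forall>\<^sub>F k in F. dist (\<integral>x. (norm (f k x))\<^sup>2 * w x \<partial>M) (\<integral>x. (norm (g x))\<^sup>2 * w x \<partial>M) < e"
    by (simp add: Cg_def)
qed

lemma integrable_sq_norm_diff_weight:
  fixes f g :: "'x \<Rightarrow> 'b::{real_normed_vector, second_countable_topology}"
  assumes w: "AE x in M. 0 \<le> w x" "w \<in> borel_measurable M"
    and f: "f \<in> borel_measurable M" "integrable M (\<lambda>x. (norm (f x))\<^sup>2 * w x)"
    and g: "g \<in> borel_measurable M" "integrable M (\<lambda>x. (norm (g x))\<^sup>2 * w x)"
  shows "integrable M (\<lambda>x. (norm (f x - g x))\<^sup>2 * w x)"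
proof (rule Bochner_Integration.integrable_bound)
  show "integrable M (\<lambda>x. 2 * ((norm (f x))\<^sup>2 * w x) + 2 * ((norm (g x))\<^sup>2 * w x))"
    using f g by simp
  show "(\<lambda>x. (norm (f x - g x))\<^sup>2 * w x) \<in> borel_measurable M"
    using f g w by measurable
  show "AE x in M. norm ((norm (f x - g x))\<^sup>2 * w x)
      \<le> norm (2 * ((norm (f x))\<^sup>2 * w x) + 2 * ((norm (g x))\<^sup>2 * w x))"
    using w(1)
  proof eventually_elim
    case (elim x)
    have "(norm (f x - g x))\<^sup>2 \<le> (norm (f x) + norm (g x))\<^sup>2"
      by (simp add: power_mono norm_triangle_ineq4)
    also have "\<dots> \<le> 2 * (norm (f x))\<^sup>2 + 2 * (norm (g x))\<^sup>2"
      using zero_le_power2[of "norm (f x) - norm (g x)"] unfolding power2_diff power2_sum by linarith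
    finally have "(norm (f x - g x))\<^sup>2 * w x \<le> (2 * (norm (f x))\<^sup>2 + 2 * (norm (g x))\<^sup>2) * w x"
      using elim by (rule mult_right_mono)
    then show ?case using elim by (simp add: abs_mult algebra_simps)
  qed
qed

lemma integrable_bounded_sq_norm_weight:
  fixes f :: "'x \<Rightarrow> 'b::real_normed_vector"
  assumes w: "AE x in M. 0 \<le> w x" "integrable M w"
    and f: "f \<in> borel_measurable M" "\<And>x. norm (f x) \<le> C"
  shows "integrable M (\<lambda>x. (norm (f x))\<^sup>2 * w x)"
proof (rule Bochner_Integration.integrable_bound)
  show "integrable M (\<lambda>x. C\<^sup>2 * w x)" using w by simp
  show "(\<lambda>x. (norm (f x))\<^sup>2 * w x) \<in> borel_measurable M"
    using f w by measurable
  show "AE x in M. norm ((norm (f x))\<^sup>2 * w x) \<le> norm (C\<^sup>2 * w x)"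
    using w(1)
  proof eventually_elim
    case (elim x)
    have "(norm (f x))\<^sup>2 \<le> C\<^sup>2" using f(2)[of x] by (simp add: power_mono)
    then show ?case using elim by (simp add: abs_mult mult_right_mono)
  qed
qed

lemma tendsto_integral_sq_weight_subset:
  fixes f :: "nat \<Rightarrow> 'b::euclidean_space \<Rightarrow> real"
  assumes B: "B \<in> sets lebesgue" and S: "S \<in> sets lebesgue" "S \<subseteq> B"
    and w: "AE x in lebesgue_on B. 0 \<le> w x"
    and g: "integrable (lebesgue_on B) (\<lambda>x. (g x)\<^sup>2 * w x)"
    and f: "\<And>k. integrable (lebesgue_on B) (\<lambda>x. (f k x)\<^sup>2 * w x)"
    and f_g: "\<And>k. integrable (lebesgue_on B) (\<lambda>x. (f k x - g x)\<^sup>2 * w x)"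
    and lim: "(\<lambda>k. \<integral>x. (f k x - g x)\<^sup>2 * w x \<partial>lebesgue_on B) \<longlonglongrightarrow> 0"
  shows "(\<lambda>k. integral S (\<lambda>x. (f k x)\<^sup>2 * w x)) \<longlonglongrightarrow> integral S (\<lambda>x. (g x)\<^sup>2 * w x)"
proof -
  have SB: "S \<in> sets (lebesgue_on B)" using S B by (simp add: sets_restrict_space_iff)
  let ?wS = "\<lambda>x. indicator S x * w x"
  have restrict: "integrable (lebesgue_on B) (\<lambda>x. h x * ?wS x)"
    if "integrable (lebesgue_on B) (\<lambda>x. h x * w x)" for h :: "'b \<Rightarrow> real"
    using integrable_mult_indicator[OF SB that] by (simp add: mult_ac)
  have integral_S: "(\<integral>x. h x * ?wS x \<partial>lebesgue_on B) = integral S (\<lambda>x. h x * w x)"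
    if "integrable (lebesgue_on B) (\<lambda>x. h x * w x)" for h :: "'b \<Rightarrow> real"
  proof -
    have "(\<integral>x. h x * ?wS x \<partial>lebesgue_on B) = integral B (\<lambda>x. h x * ?wS x)"
      by (rule lebesgue_integral_eq_integral[OF restrict[OF that] B])
    also have "\<dots> = integral B (\<lambda>x. if x \<in> S then h x * w x else 0)"
      by (rule integral_cong) (simp add: indicator_def)
    also have "\<dots> = integral S (\<lambda>x. h x * w x)"
      using integral_restrict_Int[of B S "\<lambda>x. h x * w x"] S(2) by (simp add: Int_absorb2)
    finally show ?thesis .
  qed
  have "(\<lambda>k. \<integral>x. (norm (f k x))\<^sup>2 * ?wS x \<partial>lebesgue_on B)
      \<longlonglongrightarrow> (\<integral>x. (norm (g x))\<^sup>2 * ?wS x \<partial>lebesgue_on B)"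
  proof (rule tendsto_integral_sq_norm_weight)
    show "AE x in lebesgue_on B. 0 \<le> ?wS x" using w by eventually_elim simp
    show "integrable (lebesgue_on B) (\<lambda>x. (norm (g x))\<^sup>2 * ?wS x)"
      using restrict[OF g] by simp
    show "\<forall>\<^sub>F k in sequentially. integrable (lebesgue_on B) (\<lambda>x. (norm (f k x - g x))\<^sup>2 * ?wS x)"
      using restrict[OF f_g] by simp
    show "\<forall>\<^sub>F k in sequentially. integrable (lebesgue_on B) (\<lambda>x. (norm (f k x))\<^sup>2 * ?wS x)"
      using restrict[OF f] by simp
    show "(\<lambda>k. \<integral>x. (norm (f k x - g x))\<^sup>2 * ?wS x \<partial>lebesgue_on B) \<longlonglongrightarrow> 0"
    proof (rule tendsto_sandwich[OF _ _ tendsto_const lim])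
      show "\<forall>\<^sub>F k in sequentially. 0 \<le> (\<integral>x. (norm (f k x - g x))\<^sup>2 * ?wS x \<partial>lebesgue_on B)"
      proof (intro always_eventually allI)
        fix k
        have "AE x in lebesgue_on B. 0 \<le> (norm (f k x - g x))\<^sup>2 * ?wS x"
          using w by eventually_elim simp
        then show "0 \<le> (\<integral>x. (norm (f k x - g x))\<^sup>2 * ?wS x \<partial>lebesgue_on B)"
          by (rule integral_nonneg_AE)
      qed
      show "\<forall>\<^sub>F k in sequentially. (\<integral>x. (norm (f k x - g x))\<^sup>2 * ?wS x \<partial>lebesgue_on B)
          \<le> (\<integral>x. (f k x - g x)\<^sup>2 * w x \<partial>lebesgue_on B)"
      proof (intro always_eventually allI, rule integral_mono_AE)
        fix k
        show "AE x in lebesgue_on B. (norm (f k x - g x))\<^sup>2 * ?wS x \<le> (f k x - g x)\<^sup>2 * w x"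
          using w by eventually_elim (simp add: indicator_def)
      qed (use restrict[OF f_g] f_g in simp_all)
    qed
  qed
  then show ?thesis using integral_S[OF f] integral_S[OF g] by simp
qed

lemma AE_subseq_tendsto_of_weighted_L2:
  fixes f :: "nat \<Rightarrow> 'x \<Rightarrow> real"
  assumes w: "AE x in M. 0 < w x"
    and int: "\<And>k. integrable M (\<lambda>x. (f k x - g x)\<^sup>2 * w x)"
    and lim: "(\<lambda>k. \<integral>x. (f k x - g x)\<^sup>2 * w x \<partial>M) \<longlonglongrightarrow> 0"
  obtains r where "strict_mono r" "AE x in M. (\<lambda>n. f (r n) x) \<longlonglongrightarrow> g x"
proof -
  have "(\<lambda>k. \<integral>x. norm ((f k x - g x)\<^sup>2 * w x) \<partial>M) = (\<lambda>k. \<integral>x. (f k x - g x)\<^sup>2 * w x \<partial>M)"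
  proof (intro ext integral_cong_AE)
    fix k
    show "(\<lambda>x. (f k x - g x)\<^sup>2 * w x) \<in> borel_measurable M"
      using int[of k] by (rule borel_measurable_integrable)
    show "(\<lambda>x. norm ((f k x - g x)\<^sup>2 * w x)) \<in> borel_measurable M"
      using integrable_norm[OF int[of k]] by (rule borel_measurable_integrable)
    show "AE x in M. norm ((f k x - g x)\<^sup>2 * w x) = (f k x - g x)\<^sup>2 * w x"
      using w by eventually_elim (simp add: abs_mult)
  qed
  with lim have "(\<lambda>k. \<integral>x. norm ((f k x - g x)\<^sup>2 * w x) \<partial>M) \<longlonglongrightarrow> 0" by simp
  from tendsto_L1_AE_subseq[of M "\<lambda>k x. (f k x - g x)\<^sup>2 * w x", OF int this]
  obtain r where r: "strict_mono r"
    and ae: "AE x in M. (\<lambda>n. (f (r n) x - g x)\<^sup>2 * w x) \<longlonglongrightarrow> 0"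
    by blast
  have "AE x in M. (\<lambda>n. f (r n) x) \<longlonglongrightarrow> g x"
    using ae w
  proof eventually_elim
    case (elim x)
    have "(\<lambda>n. (f (r n) x - g x)\<^sup>2 * w x * (1 / w x)) \<longlonglongrightarrow> 0 * (1 / w x)"
      by (rule tendsto_mult[OF elim(1) tendsto_const])
    then have "(\<lambda>n. (f (r n) x - g x)\<^sup>2) \<longlonglongrightarrow> 0" using elim(2) by simp
    then have "(\<lambda>n. sqrt ((f (r n) x - g x)\<^sup>2)) \<longlonglongrightarrow> sqrt 0" by (rule tendsto_real_sqrt)
    then have "(\<lambda>n. \<bar>f (r n) x - g x\<bar>) \<longlonglongrightarrow> 0" by simp
    then have "(\<lambda>n. f (r n) x - g x) \<longlonglongrightarrow> 0" by (rule tendsto_rabs_zero_cancel)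
    then show ?case by (rule LIM_zero_cancel)
  qed
  with r show ?thesis by (rule that)
qed

lemma AE_tendsto_indicator_powr_mult:
  fixes f :: "nat \<Rightarrow> 'x \<Rightarrow> real"
  assumes lim: "AE x in M. x \<in> S \<longrightarrow> (\<lambda>k. f k x) \<longlonglongrightarrow> g x" and p: "0 < p"
  shows "AE x in M. (\<lambda>k. indicator S x * (\<bar>f k x\<bar> powr p * w x))
      \<longlonglongrightarrow> indicator S x * (\<bar>g x\<bar> powr p * w x)"
  using lim
proof eventually_elim
  case (elim x)
  show ?case
  proof (cases "x \<in> S")
    case True
    then have "(\<lambda>k. \<bar>f k x\<bar> powr p) \<longlonglongrightarrow> \<bar>g x\<bar> powr p"
      using elim p by (intro tendsto_powr' tendsto_rabs tendsto_const) auto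
    then show ?thesis by (intro tendsto_mult tendsto_const)
  qed simp
qed

lemma nn_integral_le_of_AE_tendsto:
  fixes f :: "nat \<Rightarrow> 'x \<Rightarrow> real"
  assumes f: "\<And>n. (\<lambda>x. ennreal (f n x)) \<in> borel_measurable M"
    and lim: "AE x in M. (\<lambda>n. f n x) \<longlonglongrightarrow> g x"
    and bound: "\<And>n. (\<integral>\<^sup>+x. ennreal (f n x) \<partial>M) \<le> ennreal (c n)"
    and c: "c \<longlonglongrightarrow> C"
  shows "(\<integral>\<^sup>+x. ennreal (g x) \<partial>M) \<le> ennreal C"
proof -
  have "(\<integral>\<^sup>+x. ennreal (g x) \<partial>M) = (\<integral>\<^sup>+x. liminf (\<lambda>n. ennreal (f n x)) \<partial>M)"
  proof (rule nn_integral_cong_AE)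
    show "AE x in M. ennreal (g x) = liminf (\<lambda>n. ennreal (f n x))"
      using lim
    proof eventually_elim
      case (elim x)
      then have "(\<lambda>n. ennreal (f n x)) \<longlonglongrightarrow> ennreal (g x)" by (rule tendsto_ennrealI)
      then show ?case using lim_imp_Liminf[OF sequentially_bot] by metis
    qed
  qed
  also have "\<dots> \<le> liminf (\<lambda>n. \<integral>\<^sup>+x. ennreal (f n x) \<partial>M)"
    by (rule nn_integral_liminf[OF f])
  also have "\<dots> \<le> liminf (\<lambda>n. ennreal (c n))"
    by (intro Liminf_mono always_eventually allI bound)
  also have "\<dots> = ennreal C"
    using lim_imp_Liminf[OF sequentially_bot tendsto_ennrealI[OF c]] by simp
  finally show ?thesis .
qed

section \<open>Weights and test functions\<close>

lemma weight_pos_AE: "weight \<eta> \<Longrightarrow> AE x in lebesgue. 0 < \<eta> x"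
  by (simp add: weight_def)

lemma weight_nonneg_AE: "weight \<eta> \<Longrightarrow> AE x in lebesgue. 0 \<le> \<eta> x"
  by (auto simp: weight_def elim: eventually_mono)

lemma weight_absolutely_integrable_on_ball:
  "weight \<eta> \<Longrightarrow> \<eta> absolutely_integrable_on ball x r"
  by (rule set_integrable_subset[of _ "cball x r"]) (auto simp: weight_def)

lemma wmeas_ball_pos:
  fixes \<eta> :: "'a::euclidean_space \<Rightarrow> real"
  assumes w: "weight \<eta>" and r: "0 < r"
  shows "0 < wmeas \<eta> (ball x r)"
proof (rule ccontr)
  let ?B = "ball x r"
  have ai: "\<eta> absolutely_integrable_on ?B"
    using w by (rule weight_absolutely_integrable_on_ball)
  assume "\<not> 0 < wmeas \<eta> ?B"
  moreover have "(\<integral>\<^sup>+y. ennreal (indicator ?B y * \<eta> y) \<partial>lebesgue) = ennreal (wmeas \<eta> ?B)"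
    unfolding wmeas_def
    by (rule nn_integral_indicator_eq_integral)
      (use ai weight_nonneg_AE[OF w] in \<open>auto simp: absolutely_integrable_on_def elim: eventually_mono\<close>)
  ultimately have "(\<integral>\<^sup>+y. ennreal (indicator ?B y * \<eta> y) \<partial>lebesgue) = 0"
    by (simp add: ennreal_eq_0_iff)
  moreover have "(\<lambda>y. ennreal (indicator ?B y * \<eta> y)) \<in> borel_measurable lebesgue"
    using ai by (intro borel_measurable_ennreal_indicator_mult) (simp_all add: absolutely_integrable_measurable)
  ultimately have "AE y in lebesgue. ennreal (indicator ?B y * \<eta> y) = 0"
    by (simp add: nn_integral_0_iff_AE)
  then have "AE y in lebesgue. y \<notin> ?B"
    using weight_pos_AE[OF w] by eventually_elim (auto simp: indicator_def ennreal_eq_0_iff)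
  then have "negligible ?B"
    by (simp add: negligible_iff_null_sets AE_iff_null_sets)
  moreover have "\<not> negligible ?B" using r by (intro open_not_negligible) auto
  ultimately show False by simp
qed

lemma C1c_continuous: "C1c B \<phi> G \<Longrightarrow> continuous_on UNIV \<phi>"
  unfolding C1c_def by (meson has_derivative_continuous continuous_at_imp_continuous_on)

lemma C1c_borel_measurable:
  assumes "C1c B \<phi> G" "S \<in> sets lebesgue"
  shows "\<phi> \<in> borel_measurable (lebesgue_on S)" "G \<in> borel_measurable (lebesgue_on S)"
  using assms C1c_continuous[OF assms(1)] unfolding C1c_def
  by (auto intro: continuous_imp_measurable_on_sets_lebesgue continuous_on_subset)

lemma C1c_grad_eq_0:
  assumes c: "C1c B \<phi> G" and x: "x \<notin> closure {x. \<phi> x \<noteq> 0}"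
  shows "G x = 0"
proof -
  have "(\<phi> has_derivative (\<lambda>h. 0)) (at x)"
  proof (rule has_derivative_transform_within_open)
    show "((\<lambda>_. 0::real) has_derivative (\<lambda>h. 0)) (at x)" by simp
    show "\<And>y. y \<in> - closure {x. \<phi> x \<noteq> 0} \<Longrightarrow> 0 = \<phi> y"
      by (auto intro: closure_subset[THEN subsetD])
  qed (use x in auto)
  with c have "(\<lambda>h. G x \<bullet> h) = (\<lambda>h. 0)"
    unfolding C1c_def by (metis has_derivative_unique)
  then have "G x \<bullet> G x = 0" by metis
  then show ?thesis by simp
qed

lemma C1c_grad_bounded:
  assumes c: "C1c B \<phi> G"
  obtains M where "0 \<le> M" "\<And>x. norm (G x) \<le> M"
proof -
  let ?K = "closure {x. \<phi> x \<noteq> 0}"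
  have "continuous_on ?K G" using c unfolding C1c_def by (blast intro: continuous_on_subset)
  moreover have "compact ?K" using c unfolding C1c_def by blast
  ultimately have "compact (G ` ?K)" by (rule compact_continuous_image)
  then obtain M0 where "\<And>y. y \<in> G ` ?K \<Longrightarrow> norm y \<le> M0"
    using compact_imp_bounded bounded_iff by metis
  then have "norm (G x) \<le> max M0 0" for x
    using C1c_grad_eq_0[OF c, of x] by (cases "x \<in> ?K") force+
  then show ?thesis by (intro that[of "max M0 0"]) auto
qed

lemma C1c_lipschitz:
  assumes c: "C1c B \<phi> G"
  shows "\<exists>C. C-lipschitz_on UNIV \<phi>"
proof -
  obtain M where M: "0 \<le> M" "\<And>x. norm (G x) \<le> M" using C1c_grad_bounded[OF c] by metis
  have "M-lipschitz_on UNIV \<phi>"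
  proof (rule lipschitz_onI)
    fix x y :: 'a
    have "norm (\<phi> x - \<phi> y) \<le> M * norm (x - y)"
    proof (rule differentiable_bound[of UNIV])
      show "\<And>x. x \<in> UNIV \<Longrightarrow> (\<phi> has_derivative (\<lambda>h. G x \<bullet> h)) (at x within UNIV)"
        using c by (simp add: C1c_def)
      show "onorm (\<lambda>h. G x \<bullet> h) \<le> M" for x
      proof (rule onorm_bound)
        show "norm (G x \<bullet> h) \<le> M * norm h" for h
          using Cauchy_Schwarz_ineq2[of "G x" h] mult_right_mono[OF M(2)[of x] norm_ge_zero[of h]]
          by simp
      qed (rule M(1))
    qed auto
    then show "dist (\<phi> x) (\<phi> y) \<le> M * dist x y" by (simp add: dist_norm)
  qed (rule M(1))
  then show ?thesis by blast
qed

lemma C1c_bounded: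
  assumes c: "C1c B \<phi> G"
  obtains M where "\<And>x. \<bar>\<phi> x\<bar> \<le> M"
proof -
  let ?K = "closure {x. \<phi> x \<noteq> 0}"
  have "continuous_on ?K \<phi>" using C1c_continuous[OF c] by (rule continuous_on_subset) simp
  moreover have "compact ?K" using c unfolding C1c_def by blast
  ultimately have "compact (\<phi> ` ?K)" by (rule compact_continuous_image)
  then obtain M where M: "\<And>y. y \<in> \<phi> ` ?K \<Longrightarrow> norm y \<le> M"
    using compact_imp_bounded bounded_iff by metis
  have "\<bar>\<phi> x\<bar> \<le> max M 0" for x
  proof (cases "x \<in> ?K")
    case True then show ?thesis using M[of "\<phi> x"] by auto
  next
    case False then have "\<phi> x = 0" by (auto intro: closure_subset[THEN subsetD])
    then show ?thesis by simp
  qed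
  then show ?thesis by (rule that)
qed

lemma C1c_powr_weight_absolutely_integrable:
  assumes \<phi>: "C1c B \<phi> G" and S: "S \<in> sets lebesgue"
    and \<upsilon>: "\<upsilon> absolutely_integrable_on S" and p: "0 \<le> p"
  shows "(\<lambda>x. \<bar>\<phi> x\<bar> powr p * \<upsilon> x) absolutely_integrable_on S"
proof (rule absolutely_integrable_bounded_measurable_product[OF bilinear_times _ S _ \<upsilon>])
  from C1c_borel_measurable(1)[OF \<phi> S]
  show "(\<lambda>x. \<bar>\<phi> x\<bar> powr p) \<in> borel_measurable (lebesgue_on S)" by measurable
  obtain M where M: "\<And>x. \<bar>\<phi> x\<bar> \<le> M" using C1c_bounded[OF \<phi>] by metis
  have "\<bar>\<phi> x\<bar> powr p \<le> \<bar>M\<bar> powr p" for x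
    using p M[of x] abs_ge_self[of M] by (intro powr_mono2) auto
  then show "bounded ((\<lambda>x. \<bar>\<phi> x\<bar> powr p) ` S)"
    unfolding bounded_iff by auto
qed

section \<open>The interpolation inequality for weighted Sobolev functions\<close>

lemma W120_approximation:
  fixes v :: "'a::euclidean_space \<Rightarrow> real" and Dv :: "'a \<Rightarrow> 'a"
  assumes B: "B \<in> sets lebesgue" and S: "S \<in> sets lebesgue" "S \<subseteq> B"
    and \<nu>: "AE x in lebesgue. 0 < \<nu> x" "\<nu> absolutely_integrable_on B"
    and \<omega>: "AE x in lebesgue. 0 \<le> \<omega> x" "\<omega> absolutely_integrable_on B"
    and W: "W120 B \<nu> \<omega> v Dv"
  obtains \<phi> G where "\<And>k. C1c B (\<phi> k) (G k)"
    "(\<lambda>k. integral S (\<lambda>x. (\<phi> k x)\<^sup>2 * \<nu> x)) \<longlonglongrightarrow> integral S (\<lambda>x. (v x)\<^sup>2 * \<nu> x)"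
    "(\<lambda>k. integral B (\<lambda>x. (norm (G k x))\<^sup>2 * \<omega> x)) \<longlonglongrightarrow> integral B (\<lambda>x. (norm (Dv x))\<^sup>2 * \<omega> x)"
    "AE x in lebesgue. x \<in> B \<longrightarrow> (\<lambda>k. \<phi> k x) \<longlonglongrightarrow> v x"
proof -
  let ?L = "lebesgue_on B"
  obtain \<phi> G where C: "\<And>k. C1c B (\<phi> k) (G k)"
    and L1: "(\<lambda>k. integral B (\<lambda>x. (\<phi> k x - v x)\<^sup>2 * \<nu> x)) \<longlonglongrightarrow> 0"
    and L2: "(\<lambda>k. integral B (\<lambda>x. (norm (G k x - Dv x))\<^sup>2 * \<omega> x)) \<longlonglongrightarrow> 0"
    using W unfolding W120_def by blast
  have \<nu>_nonneg: "AE x in ?L. 0 \<le> \<nu> x" and \<omega>_nonneg: "AE x in ?L. 0 \<le> \<omega> x"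
    using \<nu>(1) \<omega>(1) by (auto intro!: AE_lebesgue_on B elim: eventually_mono)
  have \<nu>_int: "integrable ?L \<nu>" and \<omega>_int: "integrable ?L \<omega>"
    using \<nu>(2) \<omega>(2) B by (simp_all add: absolutely_integrable_on_iff_integrable_lebesgue_on)
  note \<nu>_meas = borel_measurable_integrable[OF \<nu>_int] and \<omega>_meas = borel_measurable_integrable[OF \<omega>_int]
  have v_meas: "v \<in> borel_measurable ?L" and Dv_meas: "Dv \<in> borel_measurable ?L"
    using W B by (simp_all add: W120_def W12_def L2w_def measurable_on_iff_borel_measurable)
  have v_int: "integrable ?L (\<lambda>x. (norm (v x))\<^sup>2 * \<nu> x)"
    using W \<nu>(1) B by (intro integrable_lebesgue_on_nonneg_AE)
      (auto simp: W120_def W12_def L2w_def elim: eventually_mono)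
  have Dv_int: "integrable ?L (\<lambda>x. (norm (Dv x))\<^sup>2 * \<omega> x)"
    using W \<omega>(1) B by (intro integrable_lebesgue_on_nonneg_AE)
      (auto simp: W120_def W12_def elim: eventually_mono)
  note \<phi>_meas = C1c_borel_measurable(1)[OF C B] and G_meas = C1c_borel_measurable(2)[OF C B]
  have \<phi>_int: "integrable ?L (\<lambda>x. (norm (\<phi> k x))\<^sup>2 * \<nu> x)" for k
  proof -
    obtain M where "\<And>x. \<bar>\<phi> k x\<bar> \<le> M" using C1c_bounded[OF C] by metis
    then show ?thesis
      by (intro integrable_bounded_sq_norm_weight[OF \<nu>_nonneg \<nu>_int \<phi>_meas]) simp
  qed
  have G_int: "integrable ?L (\<lambda>x. (norm (G k x))\<^sup>2 * \<omega> x)" for k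
  proof -
    obtain M where "\<And>x. norm (G k x) \<le> M" using C1c_grad_bounded[OF C] by metis
    then show ?thesis by (rule integrable_bounded_sq_norm_weight[OF \<omega>_nonneg \<omega>_int G_meas])
  qed
  have \<phi>_v_int: "integrable ?L (\<lambda>x. (norm (\<phi> k x - v x))\<^sup>2 * \<nu> x)" for k
    by (rule integrable_sq_norm_diff_weight[OF \<nu>_nonneg \<nu>_meas \<phi>_meas \<phi>_int v_meas v_int])
  have G_Dv_int: "integrable ?L (\<lambda>x. (norm (G k x - Dv x))\<^sup>2 * \<omega> x)" for k
    by (rule integrable_sq_norm_diff_weight[OF \<omega>_nonneg \<omega>_meas G_meas G_int Dv_meas Dv_int])
  have L1': "(\<lambda>k. \<integral>x. (\<phi> k x - v x)\<^sup>2 * \<nu> x \<partial>?L) \<longlonglongrightarrow> 0"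
    using L1 \<phi>_v_int by (simp add: lebesgue_integral_eq_integral[OF _ B])
  have L2': "(\<lambda>k. \<integral>x. (norm (G k x - Dv x))\<^sup>2 * \<omega> x \<partial>?L) \<longlonglongrightarrow> 0"
    using L2 G_Dv_int by (simp add: lebesgue_integral_eq_integral[OF _ B])
  have norms_S: "(\<lambda>k. integral S (\<lambda>x. (\<phi> k x)\<^sup>2 * \<nu> x)) \<longlonglongrightarrow> integral S (\<lambda>x. (v x)\<^sup>2 * \<nu> x)"
    by (rule tendsto_integral_sq_weight_subset[OF B S \<nu>_nonneg])
      (use v_int \<phi>_int \<phi>_v_int L1' in simp_all)
  have "(\<lambda>k. \<integral>x. (norm (G k x))\<^sup>2 * \<omega> x \<partial>?L) \<longlonglongrightarrow> (\<integral>x. (norm (Dv x))\<^sup>2 * \<omega> x \<partial>?L)"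
    by (rule tendsto_integral_sq_norm_weight[OF \<omega>_nonneg Dv_int])
      (use G_Dv_int G_int L2' in simp_all)
  then have norms_grad: "(\<lambda>k. integral B (\<lambda>x. (norm (G k x))\<^sup>2 * \<omega> x))
      \<longlonglongrightarrow> integral B (\<lambda>x. (norm (Dv x))\<^sup>2 * \<omega> x)"
    using G_int Dv_int by (simp add: lebesgue_integral_eq_integral[OF _ B])
  obtain r where r: "strict_mono r" and "AE x in ?L. (\<lambda>n. \<phi> (r n) x) \<longlonglongrightarrow> v x"
    using AE_subseq_tendsto_of_weighted_L2[OF AE_lebesgue_on[OF \<nu>(1) B] _ L1'] \<phi>_v_int by auto
  then have "AE x in lebesgue. x \<in> B \<longrightarrow> (\<lambda>n. \<phi> (r n) x) \<longlonglongrightarrow> v x"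
    using B by (subst (asm) AE_restrict_space_iff) auto
  moreover have "(\<lambda>n. integral S (\<lambda>x. (\<phi> (r n) x)\<^sup>2 * \<nu> x)) \<longlonglongrightarrow> integral S (\<lambda>x. (v x)\<^sup>2 * \<nu> x)"
    using LIMSEQ_subseq_LIMSEQ[OF norms_S r] by (simp add: comp_def)
  moreover have "(\<lambda>n. integral B (\<lambda>x. (norm (G (r n) x))\<^sup>2 * \<omega> x))
      \<longlonglongrightarrow> integral B (\<lambda>x. (norm (Dv x))\<^sup>2 * \<omega> x)"
    using LIMSEQ_subseq_LIMSEQ[OF norms_grad r] by (simp add: comp_def)
  ultimately show ?thesis using C by (intro that[of "\<lambda>n. \<phi> (r n)" "\<lambda>n. G (r n)"])
qed

text \<open>The interpolation hypothesis of the main theorem, for a single weight \<open>\<upsilon> \<in> {\<nu>, \<omega>}\<close>.\<close>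

definition weighted_interpolation ::
    "'a::euclidean_space \<Rightarrow> real \<Rightarrow> real \<Rightarrow> real \<Rightarrow>
      ('a \<Rightarrow> real) \<Rightarrow> ('a \<Rightarrow> real) \<Rightarrow> ('a \<Rightarrow> real) \<Rightarrow> bool"
  where "weighted_interpolation x0 \<rho> \<kappa> \<gamma>1 \<nu> \<omega> \<upsilon> \<longleftrightarrow>
    (\<forall>S f G.
         S \<in> sets lebesgue \<and> S \<subseteq> ball x0 \<rho> \<and>
         (\<exists>C. C-lipschitz_on UNIV f) \<and> closure {x. f x \<noteq> 0} \<subseteq> ball x0 \<rho> \<and>
         (AE x in lebesgue. (f has_derivative (\<lambda>h. G x \<bullet> h)) (at x))
         \<longrightarrow> (1 / wmeas \<upsilon> (ball x0 \<rho>)) * integral S (\<lambda>x. \<bar>f x\<bar> powr (2 * \<kappa>) * \<upsilon> x)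
             \<le> \<gamma>1\<^sup>2 * \<rho>\<^sup>2 *
               ((1 / wmeas \<nu> (ball x0 \<rho>)) * integral S (\<lambda>x. (f x)\<^sup>2 * \<nu> x)) powr (\<kappa> - 1) *
               ((1 / wmeas \<omega> (ball x0 \<rho>)) * integral (ball x0 \<rho>) (\<lambda>x. (norm (G x))\<^sup>2 * \<omega> x)))"

lemma weighted_interpolation_C1c:
  fixes x0 :: "'a::euclidean_space" and \<rho> \<kappa> \<gamma>1 :: real
  defines "B \<equiv> ball x0 \<rho>"
  assumes rho: "0 < \<rho>" and kappa: "0 \<le> \<kappa>" and \<upsilon>: "weight \<upsilon>"
    and interp: "weighted_interpolation x0 \<rho> \<kappa> \<gamma>1 \<nu> \<omega> \<upsilon>"
    and \<phi>: "C1c B \<phi> G" and S: "S \<in> sets lebesgue" "S \<subseteq> B"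
  shows "(\<integral>\<^sup>+x. ennreal (indicator S x * (\<bar>\<phi> x\<bar> powr (2 * \<kappa>) * \<upsilon> x)) \<partial>lebesgue)
     \<le> ennreal (wmeas \<upsilon> B * (\<gamma>1\<^sup>2 * \<rho>\<^sup>2 *
           ((1 / wmeas \<nu> B) * integral S (\<lambda>x. (\<phi> x)\<^sup>2 * \<nu> x)) powr (\<kappa> - 1) *
           ((1 / wmeas \<omega> B) * integral B (\<lambda>x. (norm (G x))\<^sup>2 * \<omega> x))))"
proof -
  have "\<upsilon> absolutely_integrable_on S"
    using weight_absolutely_integrable_on_ball[OF \<upsilon>] S unfolding B_def
    by (blast intro: set_integrable_subset)
  then have "(\<lambda>x. \<bar>\<phi> x\<bar> powr (2 * \<kappa>) * \<upsilon> x) absolutely_integrable_on S"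
    using kappa by (intro C1c_powr_weight_absolutely_integrable[OF \<phi> S(1)]) auto
  then have "(\<integral>\<^sup>+x. ennreal (indicator S x * (\<bar>\<phi> x\<bar> powr (2 * \<kappa>) * \<upsilon> x)) \<partial>lebesgue)
      = ennreal (integral S (\<lambda>x. \<bar>\<phi> x\<bar> powr (2 * \<kappa>) * \<upsilon> x))"
    using weight_nonneg_AE[OF \<upsilon>]
    by (intro nn_integral_indicator_eq_integral S(1))
      (auto simp: absolutely_integrable_on_def elim: eventually_mono)
  also have "\<dots> \<le> ennreal (wmeas \<upsilon> B * (\<gamma>1\<^sup>2 * \<rho>\<^sup>2 *
           ((1 / wmeas \<nu> B) * integral S (\<lambda>x. (\<phi> x)\<^sup>2 * \<nu> x)) powr (\<kappa> - 1) *
           ((1 / wmeas \<omega> B) * integral B (\<lambda>x. (norm (G x))\<^sup>2 * \<omega> x))))"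
    using interp C1c_lipschitz[OF \<phi>] \<phi> S wmeas_ball_pos[OF \<upsilon> rho]
    unfolding weighted_interpolation_def C1c_def B_def by (intro ennreal_leI) (simp add: field_simps)
  finally show ?thesis .
qed

lemma interpolation_W120:
  fixes x0 :: "'a::euclidean_space" and \<rho> :: real
    and v \<nu> \<omega> \<upsilon> :: "'a \<Rightarrow> real" and Dv :: "'a \<Rightarrow> 'a"
  defines "B \<equiv> ball x0 \<rho>"
  assumes rho: "0 < \<rho>" and kappa: "1 < \<kappa>"
    and weights: "weight \<nu>" "weight \<omega>" "weight \<upsilon>"
    and interp: "weighted_interpolation x0 \<rho> \<kappa> \<gamma>1 \<nu> \<omega> \<upsilon>"
    and W: "W120 B \<nu> \<omega> v Dv" and S: "S \<in> sets lebesgue" "S \<subseteq> B"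
  shows "(\<integral>\<^sup>+x. ennreal (indicator S x * (\<bar>v x\<bar> powr (2 * \<kappa>) * \<upsilon> x)) \<partial>lebesgue)
     \<le> ennreal (wmeas \<upsilon> B * (\<gamma>1\<^sup>2 * \<rho>\<^sup>2 *
           ((1 / wmeas \<nu> B) * integral S (\<lambda>x. (v x)\<^sup>2 * \<nu> x)) powr (\<kappa> - 1) *
           ((1 / wmeas \<omega> B) * integral B (\<lambda>x. (norm (Dv x))\<^sup>2 * \<omega> x))))"
proof -
  have B: "B \<in> sets lebesgue" by (simp add: B_def)
  obtain \<phi> G where C: "\<And>k. C1c B (\<phi> k) (G k)"
    and norms_S: "(\<lambda>k. integral S (\<lambda>x. (\<phi> k x)\<^sup>2 * \<nu> x)) \<longlonglongrightarrow> integral S (\<lambda>x. (v x)\<^sup>2 * \<nu> x)"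
    and norms_grad: "(\<lambda>k. integral B (\<lambda>x. (norm (G k x))\<^sup>2 * \<omega> x))
        \<longlonglongrightarrow> integral B (\<lambda>x. (norm (Dv x))\<^sup>2 * \<omega> x)"
    and pointwise: "AE x in lebesgue. x \<in> B \<longrightarrow> (\<lambda>k. \<phi> k x) \<longlonglongrightarrow> v x"
    using W120_approximation[OF B S weight_pos_AE[OF weights(1)] _ weight_nonneg_AE[OF weights(2)] _ W]
      weight_absolutely_integrable_on_ball[OF weights(1)] weight_absolutely_integrable_on_ball[OF weights(2)]
    unfolding B_def by blast
  have "0 \<le> (1 / wmeas \<nu> B) * integral S (\<lambda>x. (\<phi> k x)\<^sup>2 * \<nu> x)" for k
    using weight_nonneg_AE[OF weights(1)] wmeas_ball_pos[OF weights(1) rho, of x0] unfolding B_def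
    by (intro mult_nonneg_nonneg integral_nonneg_AE_on) (auto elim: eventually_mono)
  then have "(\<lambda>k. ((1 / wmeas \<nu> B) * integral S (\<lambda>x. (\<phi> k x)\<^sup>2 * \<nu> x)) powr (\<kappa> - 1))
      \<longlonglongrightarrow> ((1 / wmeas \<nu> B) * integral S (\<lambda>x. (v x)\<^sup>2 * \<nu> x)) powr (\<kappa> - 1)"
    using kappa by (intro tendsto_powr' tendsto_mult_left norms_S tendsto_const) (auto intro: always_eventually)
  then have bounds_lim: "(\<lambda>k. wmeas \<upsilon> B * (\<gamma>1\<^sup>2 * \<rho>\<^sup>2 *
      ((1 / wmeas \<nu> B) * integral S (\<lambda>x. (\<phi> k x)\<^sup>2 * \<nu> x)) powr (\<kappa> - 1) *
      ((1 / wmeas \<omega> B) * integral B (\<lambda>x. (norm (G k x))\<^sup>2 * \<omega> x))))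
    \<longlonglongrightarrow> wmeas \<upsilon> B * (\<gamma>1\<^sup>2 * \<rho>\<^sup>2 *
      ((1 / wmeas \<nu> B) * integral S (\<lambda>x. (v x)\<^sup>2 * \<nu> x)) powr (\<kappa> - 1) *
      ((1 / wmeas \<omega> B) * integral B (\<lambda>x. (norm (Dv x))\<^sup>2 * \<omega> x)))"
    by (intro tendsto_mult norms_grad tendsto_mult_left tendsto_const)
  show ?thesis
  proof (rule nn_integral_le_of_AE_tendsto[OF _ _ _ bounds_lim])
    show "AE x in lebesgue. (\<lambda>k. indicator S x * (\<bar>\<phi> k x\<bar> powr (2 * \<kappa>) * \<upsilon> x))
        \<longlonglongrightarrow> indicator S x * (\<bar>v x\<bar> powr (2 * \<kappa>) * \<upsilon> x)"
      using pointwise S(2) kappa by (intro AE_tendsto_indicator_powr_mult) (auto elim!: eventually_mono)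
    show "(\<integral>\<^sup>+x. ennreal (indicator S x * (\<bar>\<phi> k x\<bar> powr (2 * \<kappa>) * \<upsilon> x)) \<partial>lebesgue)
        \<le> ennreal (wmeas \<upsilon> B * (\<gamma>1\<^sup>2 * \<rho>\<^sup>2 *
          ((1 / wmeas \<nu> B) * integral S (\<lambda>x. (\<phi> k x)\<^sup>2 * \<nu> x)) powr (\<kappa> - 1) *
          ((1 / wmeas \<omega> B) * integral B (\<lambda>x. (norm (G k x))\<^sup>2 * \<omega> x))))" for k
      using weighted_interpolation_C1c[OF rho _ weights(3) interp C[unfolded B_def] S[unfolded B_def]] kappa
      unfolding B_def by simp
    show "(\<lambda>x. ennreal (indicator S x * (\<bar>\<phi> k x\<bar> powr (2 * \<kappa>) * \<upsilon> x))) \<in> borel_measurable lebesgue" for k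
    proof -
      have "\<upsilon> absolutely_integrable_on S"
        using weight_absolutely_integrable_on_ball[OF weights(3)] S unfolding B_def
        by (blast intro: set_integrable_subset)
      then have "(\<lambda>x. \<bar>\<phi> k x\<bar> powr (2 * \<kappa>) * \<upsilon> x) \<in> borel_measurable (lebesgue_on S)"
        using C1c_powr_weight_absolutely_integrable[OF C S(1)] kappa S(1)
        by (simp add: absolutely_integrable_measurable)
      then show ?thesis by (rule borel_measurable_ennreal_indicator_mult[OF _ S(1)])
    qed
  qed
qed

lemma interpolation_W120_le_sup:
  fixes x0 :: "'a::euclidean_space" and \<rho> \<kappa> \<gamma>1 Y :: real
    and v \<nu> \<omega> \<upsilon> :: "'a \<Rightarrow> real" and Dv :: "'a \<Rightarrow> 'a"
  defines "B \<equiv> ball x0 \<rho>"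
  defines "C \<equiv> wmeas \<upsilon> B * \<gamma>1\<^sup>2 * \<rho>\<^sup>2 * (1 / wmeas \<nu> B) powr (\<kappa> - 1) * Y powr (\<kappa> - 1) *
      (1 / wmeas \<omega> B)"
  assumes rho: "0 < \<rho>" and kappa: "1 < \<kappa>"
    and weights: "weight \<nu>" "weight \<omega>" "weight \<upsilon>"
    and interp: "weighted_interpolation x0 \<rho> \<kappa> \<gamma>1 \<nu> \<omega> \<upsilon>"
    and W: "W120 B \<nu> \<omega> v Dv" and S: "S \<in> sets lebesgue" "S \<subseteq> B"
    and Y: "integral S (\<lambda>x. (v x)\<^sup>2 * \<nu> x) \<le> Y"
  shows "(\<integral>\<^sup>+x. ennreal (indicator S x * (\<bar>v x\<bar> powr (2 * \<kappa>) * \<upsilon> x)) \<partial>lebesgue)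
     \<le> (\<integral>\<^sup>+x. ennreal (indicator B x * (C * ((norm (Dv x))\<^sup>2 * \<omega> x))) \<partial>lebesgue)"
proof -
  let ?N = "integral S (\<lambda>x. (v x)\<^sup>2 * \<nu> x)" and ?H = "integral B (\<lambda>x. (norm (Dv x))\<^sup>2 * \<omega> x)"
  define K where "K = wmeas \<upsilon> B * \<gamma>1\<^sup>2 * \<rho>\<^sup>2 * (1 / wmeas \<nu> B) powr (\<kappa> - 1) * (1 / wmeas \<omega> B) * ?H"
  have "0 \<le> ?N"
    using weight_nonneg_AE[OF weights(1)] by (intro integral_nonneg_AE_on) (auto elim: eventually_mono)
  have "0 \<le> C"
    using wmeas_ball_pos[OF weights(2) rho] wmeas_ball_pos[OF weights(3) rho]
    unfolding C_def B_def by (intro mult_nonneg_nonneg) (simp_all add: less_imp_le)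
  have H: "(\<lambda>x. (norm (Dv x))\<^sup>2 * \<omega> x) integrable_on B"
    using W by (simp add: W120_def W12_def)
  have \<omega>_nonneg: "AE x in lebesgue. x \<in> B \<longrightarrow> 0 \<le> (norm (Dv x))\<^sup>2 * \<omega> x"
    using weight_nonneg_AE[OF weights(2)] by eventually_elim simp
  have "0 \<le> K"
    using integral_nonneg_AE_on[OF \<omega>_nonneg] wmeas_ball_pos[OF weights(2) rho]
      wmeas_ball_pos[OF weights(3) rho]
    unfolding K_def B_def by (intro mult_nonneg_nonneg) (simp_all add: less_imp_le)
  have "(\<integral>\<^sup>+x. ennreal (indicator S x * (\<bar>v x\<bar> powr (2 * \<kappa>) * \<upsilon> x)) \<partial>lebesgue)
     \<le> ennreal (wmeas \<upsilon> B * (\<gamma>1\<^sup>2 * \<rho>\<^sup>2 * ((1 / wmeas \<nu> B) * ?N) powr (\<kappa> - 1) *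
           ((1 / wmeas \<omega> B) * ?H)))"
    using interpolation_W120[OF rho kappa weights interp W[unfolded B_def] S[unfolded B_def]]
    unfolding B_def .
  also have "\<dots> = ennreal (K * ?N powr (\<kappa> - 1))"
    unfolding powr_mult K_def by (simp add: mult_ac)
  also have "\<dots> \<le> ennreal (K * Y powr (\<kappa> - 1))"
    using \<open>0 \<le> ?N\<close> Y kappa \<open>0 \<le> K\<close> by (intro ennreal_leI mult_left_mono powr_mono2) auto
  also have "\<dots> = ennreal (C * ?H)"
    by (simp add: K_def C_def mult_ac)
  also have "\<dots> = ennreal (integral B (\<lambda>x. C * ((norm (Dv x))\<^sup>2 * \<omega> x)))"
    by simp
  also have "\<dots> = (\<integral>\<^sup>+x. ennreal (indicator B x * (C * ((norm (Dv x))\<^sup>2 * \<omega> x))) \<partial>lebesgue)"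
  proof (rule nn_integral_indicator_eq_integral[symmetric])
    show "(\<lambda>x. C * ((norm (Dv x))\<^sup>2 * \<omega> x)) integrable_on B"
      using integrable_on_cmult_left[OF H, of C] by simp
    show "AE x in lebesgue. x \<in> B \<longrightarrow> 0 \<le> C * ((norm (Dv x))\<^sup>2 * \<omega> x)"
      using \<omega>_nonneg by eventually_elim (use \<open>0 \<le> C\<close> in simp)
  qed (simp add: B_def)
  finally show ?thesis .
qed

section \<open>The parabolic inequality\<close>

lemma par_space_L2_norm_continuous:
  assumes u: "par_space s1 s2 B \<nu> \<omega> u Du" and B: "B \<in> sets lebesgue"
    and \<nu>: "AE x in lebesgue. 0 \<le> \<nu> x" "\<nu> \<in> borel_measurable (lebesgue_on B)"
  shows "continuous_on {s1..s2} (\<lambda>t. integral B (\<lambda>x. (u x t)\<^sup>2 * \<nu> x))"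
proof -
  let ?L = "lebesgue_on B"
  have \<nu>_nonneg: "AE x in ?L. 0 \<le> \<nu> x" by (rule AE_lebesgue_on[OF \<nu>(1) B])
  have u_meas: "(\<lambda>x. u x t) \<in> borel_measurable ?L" if "t \<in> {s1..s2}" for t
    using u that B by (simp add: par_space_def L2w_def measurable_on_iff_borel_measurable)
  have u_int: "integrable ?L (\<lambda>x. (norm (u x t))\<^sup>2 * \<nu> x)" if "t \<in> {s1..s2}" for t
    using u that \<nu>(1) B by (intro integrable_lebesgue_on_nonneg_AE)
      (auto simp: par_space_def L2w_def elim: eventually_mono)
  have integral_eq: "integral B (\<lambda>x. (norm (h x))\<^sup>2 * \<nu> x) = (\<integral>x. (norm (h x))\<^sup>2 * \<nu> x \<partial>?L)"
    if "integrable ?L (\<lambda>x. (norm (h x))\<^sup>2 * \<nu> x)" for h :: "_ \<Rightarrow> real"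
    by (rule lebesgue_integral_eq_integral[OF that B, symmetric])
  have within: "\<forall>\<^sub>F s in at t within {s1..s2}. s \<in> {s1..s2}" for t
    by (auto simp: eventually_at_filter)
  show ?thesis
    unfolding continuous_on_def
  proof
    fix t assume t: "t \<in> {s1..s2}"
    have diff_int: "integrable ?L (\<lambda>x. (norm (u x s - u x t))\<^sup>2 * \<nu> x)" if "s \<in> {s1..s2}" for s
      by (rule integrable_sq_norm_diff_weight[OF \<nu>_nonneg \<nu>(2)
            u_meas[OF that] u_int[OF that] u_meas[OF t] u_int[OF t]])
    have "((\<lambda>s. \<integral>x. (norm (u x s))\<^sup>2 * \<nu> x \<partial>?L) \<longlongrightarrow> (\<integral>x. (norm (u x t))\<^sup>2 * \<nu> x \<partial>?L))
        (at t within {s1..s2})"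
    proof (rule tendsto_integral_sq_norm_weight[OF \<nu>_nonneg u_int[OF t]])
      show "\<forall>\<^sub>F s in at t within {s1..s2}. integrable ?L (\<lambda>x. (norm (u x s - u x t))\<^sup>2 * \<nu> x)"
        using within by eventually_elim (rule diff_int)
      show "\<forall>\<^sub>F s in at t within {s1..s2}. integrable ?L (\<lambda>x. (norm (u x s))\<^sup>2 * \<nu> x)"
        using within by eventually_elim (rule u_int)
      have lim: "((\<lambda>s. integral B (\<lambda>x. (u x s - u x t)\<^sup>2 * \<nu> x)) \<longlongrightarrow> 0) (at t within {s1..s2})"
        using u t unfolding par_space_def by blast
      have "\<forall>\<^sub>F s in at t within {s1..s2}.
          integral B (\<lambda>x. (u x s - u x t)\<^sup>2 * \<nu> x) = (\<integral>x. (norm (u x s - u x t))\<^sup>2 * \<nu> x \<partial>?L)"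
        using within by eventually_elim (use integral_eq[OF diff_int] in simp)
      from tendsto_cong[OF this] lim
      show "((\<lambda>s. \<integral>x. (norm (u x s - u x t))\<^sup>2 * \<nu> x \<partial>?L) \<longlongrightarrow> 0) (at t within {s1..s2})"
        by simp
    qed
    moreover have "\<forall>\<^sub>F s in at t within {s1..s2}.
        (\<integral>x. (norm (u x s))\<^sup>2 * \<nu> x \<partial>?L) = integral B (\<lambda>x. (u x s)\<^sup>2 * \<nu> x)"
      using within by eventually_elim (use integral_eq[OF u_int] in simp)
    ultimately show "((\<lambda>s. integral B (\<lambda>x. (u x s)\<^sup>2 * \<nu> x)) \<longlongrightarrow> integral B (\<lambda>x. (u x t)\<^sup>2 * \<nu> x))
        (at t within {s1..s2})"
      using integral_eq[OF u_int[OF t]] by (simp add: tendsto_cong)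
  qed
qed

lemma par_space_slice_L2_bdd_above:
  assumes u: "par_space s1 s2 B \<nu> \<omega> u Du" and B: "B \<in> sets lebesgue"
    and \<nu>: "AE x in lebesgue. 0 \<le> \<nu> x" "\<nu> \<in> borel_measurable (lebesgue_on B)"
    and A: "\<And>t. t \<in> {s1<..<s2} \<Longrightarrow> A t \<in> sets lebesgue \<and> A t \<subseteq> B"
  shows "bdd_above ((\<lambda>t. integral (A t) (\<lambda>x. (u x t)\<^sup>2 * \<nu> x)) ` {s1<..<s2})"
proof -
  have "compact ((\<lambda>t. integral B (\<lambda>x. (u x t)\<^sup>2 * \<nu> x)) ` {s1..s2})"
    by (rule compact_continuous_image[OF par_space_L2_norm_continuous[OF u B \<nu>] compact_Icc])
  then have "bounded ((\<lambda>t. integral B (\<lambda>x. (u x t)\<^sup>2 * \<nu> x)) ` {s1..s2})"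
    by (rule compact_imp_bounded)
  then obtain M where M: "\<forall>y \<in> (\<lambda>t. integral B (\<lambda>x. (u x t)\<^sup>2 * \<nu> x)) ` {s1..s2}. norm y \<le> M"
    unfolding bounded_iff by blast
  show ?thesis
  proof (rule bdd_aboveI2)
    fix t assume t: "t \<in> {s1<..<s2}"
    have "integral (A t) (\<lambda>x. (u x t)\<^sup>2 * \<nu> x) \<le> integral B (\<lambda>x. (u x t)\<^sup>2 * \<nu> x)"
    proof (rule integral_subset_le_nonneg_AE)
      show "(\<lambda>x. (u x t)\<^sup>2 * \<nu> x) integrable_on B"
        using u t unfolding par_space_def L2w_def by auto
      show "AE x in lebesgue. x \<in> B \<longrightarrow> 0 \<le> (u x t)\<^sup>2 * \<nu> x"
        using \<nu>(1) by eventually_elim simp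
    qed (use A[OF t] B in auto)
    also have "\<dots> \<le> M" using M t by (auto dest!: bspec[of _ _ t])
    finally show "integral (A t) (\<lambda>x. (u x t)\<^sup>2 * \<nu> x) \<le> M" .
  qed
qed

lemma par_space_powr_weight_measurable:
  assumes u: "par_space s1 s2 B \<nu> \<omega> u Du" and B: "open B"
    and \<upsilon>: "\<upsilon> \<in> borel_measurable (lebesgue_on B)"
  shows "(\<lambda>(x, t). \<bar>u x t\<bar> powr p * \<upsilon> x) \<in> borel_measurable (lebesgue_on (B \<times> {s1<..<s2}))"
proof -
  have "(\<lambda>(x, t). u x t) \<in> borel_measurable (lebesgue_on (B \<times> {s1<..<s2}))"
    using u B by (simp add: par_space_def measurable_on_iff_borel_measurable open_imp_sets_lebesgue open_Times)
  moreover have "(\<lambda>z. \<upsilon> (fst z)) \<in> borel_measurable (lebesgue_on (B \<times> {s1<..<s2}))"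
    using \<upsilon> B by (intro borel_measurable_lebesgue_on_fst open_imp_sets_lebesgue)
  ultimately show ?thesis by (simp add: case_prod_beta') measurable
qed

lemma par_space_slices_interpolation:
  fixes x0 :: "'a::euclidean_space" and \<rho> s1 s2 \<kappa> \<gamma>1 Y :: real
    and \<nu> \<omega> \<upsilon> :: "'a \<Rightarrow> real" and A :: "real \<Rightarrow> 'a set"
    and u :: "'a \<Rightarrow> real \<Rightarrow> real" and Du :: "'a \<Rightarrow> real \<Rightarrow> 'a"
  defines "B \<equiv> ball x0 \<rho>" and "I \<equiv> {s1<..<s2}"
  defines "C \<equiv> wmeas \<upsilon> B * \<gamma>1\<^sup>2 * \<rho>\<^sup>2 * (1 / wmeas \<nu> B) powr (\<kappa> - 1) * Y powr (\<kappa> - 1) *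
      (1 / wmeas \<omega> B)"
  assumes rho: "0 < \<rho>" and kappa: "1 < \<kappa>"
    and weights: "weight \<nu>" "weight \<omega>" "weight \<upsilon>"
    and interp: "weighted_interpolation x0 \<rho> \<kappa> \<gamma>1 \<nu> \<omega> \<upsilon>"
    and A: "\<And>t. t \<in> I \<Longrightarrow> A t \<in> sets lebesgue \<and> A t \<subseteq> B"
    and Y: "\<And>t. t \<in> I \<Longrightarrow> integral (A t) (\<lambda>x. (u x t)\<^sup>2 * \<nu> x) \<le> Y"
    and u: "par_space s1 s2 B \<nu> \<omega> u Du"
  shows "AE t in lborel.
      (\<integral>\<^sup>+x. ennreal (indicator {(x, t). t \<in> I \<and> x \<in> A t} (x, t) * (\<bar>u x t\<bar> powr (2 * \<kappa>) * \<upsilon> x)) \<partial>lebesgue)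
      \<le> (\<integral>\<^sup>+x. ennreal (indicator (B \<times> I) (x, t) * (C * ((norm (Du x t))\<^sup>2 * \<omega> x))) \<partial>lebesgue)"
proof -
  have "AE t in lborel. t \<in> I \<longrightarrow> W120 B \<nu> \<omega> (\<lambda>x. u x t) (\<lambda>x. Du x t)"
    using u by (simp add: par_space_def I_def AE_completion_iff)
  then show ?thesis
  proof eventually_elim
    case (elim t)
    show ?case
    proof (cases "t \<in> I")
      case True
      then have "(\<integral>\<^sup>+x. ennreal (indicator {(x, t). t \<in> I \<and> x \<in> A t} (x, t) *
            (\<bar>u x t\<bar> powr (2 * \<kappa>) * \<upsilon> x)) \<partial>lebesgue)
          = (\<integral>\<^sup>+x. ennreal (indicator (A t) x * (\<bar>u x t\<bar> powr (2 * \<kappa>) * \<upsilon> x)) \<partial>lebesgue)"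
        by (simp add: indicator_def)
      also have "\<dots> \<le> (\<integral>\<^sup>+x. ennreal (indicator B x * (C * ((norm (Du x t))\<^sup>2 * \<omega> x))) \<partial>lebesgue)"
        using interpolation_W120_le_sup[OF rho kappa weights interp _ _ _ Y[OF True]] A[OF True] elim True
        by (simp add: C_def B_def)
      also have "\<dots> = (\<integral>\<^sup>+x. ennreal (indicator (B \<times> I) (x, t) * (C * ((norm (Du x t))\<^sup>2 * \<omega> x))) \<partial>lebesgue)"
        using True by (simp add: indicator_def)
      finally show ?thesis .
    qed (simp add: indicator_def)
  qed
qed

lemma parabolic_interpolation:
  fixes x0 :: "'a::euclidean_space" and \<rho> s1 s2 :: real
    and \<nu> \<omega> \<upsilon> :: "'a \<Rightarrow> real" and A :: "real \<Rightarrow> 'a set"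
    and u :: "'a \<Rightarrow> real \<Rightarrow> real" and Du :: "'a \<Rightarrow> real \<Rightarrow> 'a"
  defines "B \<equiv> ball x0 \<rho>" and "I \<equiv> {s1<..<s2}"
  assumes rho: "0 < \<rho>" and kappa: "1 < \<kappa>"
    and weights: "weight \<nu>" "weight \<omega>" "weight \<upsilon>"
    and interp: "weighted_interpolation x0 \<rho> \<kappa> \<gamma>1 \<nu> \<omega> \<upsilon>"
    and A: "\<And>t. t \<in> I \<Longrightarrow> A t \<in> sets lebesgue"
    and E_def: "E = {(x, t). t \<in> I \<and> x \<in> A t}"
    and E: "E \<in> sets lebesgue" "E \<subseteq> B \<times> I"
    and u: "par_space s1 s2 B \<nu> \<omega> u Du"
  shows "(\<lambda>(x, t). \<bar>u x t\<bar> powr (2 * \<kappa>) * \<upsilon> x) integrable_on E \<and>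
      (1 / wmeas \<upsilon> B) * integral E (\<lambda>(x, t). \<bar>u x t\<bar> powr (2 * \<kappa>) * \<upsilon> x)
      \<le> \<gamma>1\<^sup>2 * \<rho>\<^sup>2 * (1 / wmeas \<nu> B) powr (\<kappa> - 1) *
         (SUP t\<in>I. integral (A t) (\<lambda>x. (u x t)\<^sup>2 * \<nu> x)) powr (\<kappa> - 1) *
         ((1 / wmeas \<omega> B) * integral (B \<times> I) (\<lambda>(x, t). (norm (Du x t))\<^sup>2 * \<omega> x))"
proof -
  have B: "B \<in> sets lebesgue" and BI: "B \<times> I \<in> sets lebesgue"
    unfolding B_def I_def by (simp_all add: open_imp_sets_lebesgue open_Times)
  have A_sub: "A t \<in> sets lebesgue \<and> A t \<subseteq> B" if "t \<in> I" for t
    using A[OF that] E that unfolding E_def by auto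
  have \<nu>_meas: "\<nu> \<in> borel_measurable (lebesgue_on B)" and \<upsilon>_meas: "\<upsilon> \<in> borel_measurable (lebesgue_on B)"
    using weight_absolutely_integrable_on_ball[OF weights(1)] weight_absolutely_integrable_on_ball[OF weights(3)] B
    by (simp_all add: B_def absolutely_integrable_measurable)
  define Y where "Y = (SUP t\<in>I. integral (A t) (\<lambda>x. (u x t)\<^sup>2 * \<nu> x))"
  define C where "C = wmeas \<upsilon> B * \<gamma>1\<^sup>2 * \<rho>\<^sup>2 * (1 / wmeas \<nu> B) powr (\<kappa> - 1) * Y powr (\<kappa> - 1) *
      (1 / wmeas \<omega> B)"
  define f where "f = (\<lambda>(x, t). \<bar>u x t\<bar> powr (2 * \<kappa>) * \<upsilon> x)"
  define g where "g = (\<lambda>(x, t). C * ((norm (Du x t))\<^sup>2 * \<omega> x))"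
  have \<upsilon>_pos: "0 < wmeas \<upsilon> B" using wmeas_ball_pos[OF weights(3) rho] by (simp add: B_def)
  have "0 \<le> C"
    using \<upsilon>_pos wmeas_ball_pos[OF weights(2) rho]
    unfolding C_def B_def by (intro mult_nonneg_nonneg) (simp_all add: less_imp_le)
  have "bdd_above ((\<lambda>t. integral (A t) (\<lambda>x. (u x t)\<^sup>2 * \<nu> x)) ` I)"
    unfolding I_def
    by (rule par_space_slice_L2_bdd_above[OF u B weight_nonneg_AE[OF weights(1)] \<nu>_meas])
      (use A_sub in \<open>simp add: I_def\<close>)
  then have "integral (A t) (\<lambda>x. (u x t)\<^sup>2 * \<nu> x) \<le> Y" if "t \<in> I" for t
    unfolding Y_def using that by (rule cSUP_upper2) simp
  then have slices: "AE t in lborel. (\<integral>\<^sup>+x. ennreal (indicator E (x, t) * f (x, t)) \<partial>lebesgue)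
      \<le> (\<integral>\<^sup>+x. ennreal (indicator (B \<times> I) (x, t) * g (x, t)) \<partial>lebesgue)"
    using par_space_slices_interpolation[where A = A and Y = Y,
        OF rho kappa weights interp A_sub[unfolded B_def I_def] _ u[unfolded B_def]]
    unfolding E_def f_def g_def C_def B_def I_def by simp
  have "(\<lambda>(x, t). (norm (Du x t))\<^sup>2 * \<omega> x) integrable_on B \<times> I"
    using u unfolding par_space_def B_def I_def by blast
  from integrable_on_cmult_left[OF this, of C]
  have g_int: "g integrable_on B \<times> I" by (simp add: g_def case_prod_beta')
  have "f \<in> borel_measurable (lebesgue_on E)"
    using par_space_powr_weight_measurable[OF u open_ball[of x0 \<rho>, folded B_def] \<upsilon>_meas] E(2)
    unfolding f_def I_def by (rule measurable_restrict_mono)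
  moreover have "AE z in lebesgue. z \<in> E \<longrightarrow> 0 \<le> f z"
    using AE_lebesgue_fst[OF weight_nonneg_AE[OF weights(3)]] by eventually_elim (auto simp: f_def)
  moreover have "AE z in lebesgue. z \<in> B \<times> I \<longrightarrow> 0 \<le> g z"
    using AE_lebesgue_fst[OF weight_nonneg_AE[OF weights(2)]]
    by eventually_elim (use \<open>0 \<le> C\<close> in \<open>auto simp: g_def\<close>)
  ultimately have fg: "f integrable_on E" "integral E f \<le> integral (B \<times> I) g"
    using integral_le_by_slices[OF E(1) BI _ _ g_int _ slices] by blast+
  have "(1 / wmeas \<upsilon> B) * integral E f \<le> (1 / wmeas \<upsilon> B) * integral (B \<times> I) g"
    using fg(2) \<upsilon>_pos by (intro mult_left_mono) auto
  also have "\<dots> = \<gamma>1\<^sup>2 * \<rho>\<^sup>2 * (1 / wmeas \<nu> B) powr (\<kappa> - 1) * Y powr (\<kappa> - 1) *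
      ((1 / wmeas \<omega> B) * integral (B \<times> I) (\<lambda>(x, t). (norm (Du x t))\<^sup>2 * \<omega> x))"
    using \<upsilon>_pos by (simp add: g_def C_def case_prod_beta')
  finally show ?thesis using fg(1) unfolding f_def Y_def by blast
qed

theorem mainTheorem2:
  fixes x0 :: "'a::euclidean_space"
    and \<rho> K1 K2 q \<sigma>1 \<kappa> \<gamma>1 T s1 s2 :: real
    and \<nu> \<omega> :: "'a \<Rightarrow> real"
    and A :: "real \<Rightarrow> 'a set" and E :: "('a \<times> real) set"
    and u :: "'a \<Rightarrow> real \<Rightarrow> real" and Du :: "'a \<Rightarrow> real \<Rightarrow> 'a"
  assumes rho: "0 < \<rho>"
    and omega_A2: "A2 K1 \<omega>"
    and B12q: "B12q q K2 \<nu> \<omega>" and q: "2 < q"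
    and nu_Ainf: "A_infty \<nu>"
    and sigma1: "1 < \<sigma>1" "\<sigma>1 < q"
    and kappa: "1 < \<kappa>" "\<kappa> \<le> \<sigma>1"
    and interpolation:
      "\<forall>\<upsilon>\<in>{\<nu>, \<omega>}. \<forall>S f G.
         S \<in> sets lebesgue \<and> S \<subseteq> ball x0 \<rho> \<and>
         (\<exists>C. C-lipschitz_on UNIV f) \<and> closure {x. f x \<noteq> 0} \<subseteq> ball x0 \<rho> \<and>
         (AE x in lebesgue. (f has_derivative (\<lambda>h. G x \<bullet> h)) (at x))
         \<longrightarrow> (1 / wmeas \<upsilon> (ball x0 \<rho>)) * integral S (\<lambda>x. \<bar>f x\<bar> powr (2 * \<kappa>) * \<upsilon> x)
             \<le> \<gamma>1\<^sup>2 * \<rho>\<^sup>2 *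
               ((1 / wmeas \<nu> (ball x0 \<rho>)) * integral S (\<lambda>x. (f x)\<^sup>2 * \<nu> x)) powr (\<kappa> - 1) *
               ((1 / wmeas \<omega> (ball x0 \<rho>)) * integral (ball x0 \<rho>) (\<lambda>x. (norm (G x))\<^sup>2 * \<omega> x))"
    and times: "0 < T" "0 < s1" "s1 < s2" "s2 < T"
    and A_open: "\<forall>t\<in>{s1<..<s2}. open (A t)"
    and E_def: "E = {(x, t). t \<in> {s1<..<s2} \<and> x \<in> A t}"
    and E_open: "open E" and E_sub: "E \<subseteq> ball x0 \<rho> \<times> {s1<..<s2}"
    and u: "par_space s1 s2 (ball x0 \<rho>) \<nu> \<omega> u Du"
  shows "\<forall>\<upsilon>\<in>{\<nu>, \<omega>}.
      (\<lambda>(x, t). \<bar>u x t\<bar> powr (2 * \<kappa>) * \<upsilon> x) integrable_on E \<and>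
      (1 / wmeas \<upsilon> (ball x0 \<rho>)) * integral E (\<lambda>(x, t). \<bar>u x t\<bar> powr (2 * \<kappa>) * \<upsilon> x)
      \<le> \<gamma>1\<^sup>2 * \<rho>\<^sup>2 * (1 / wmeas \<nu> (ball x0 \<rho>)) powr (\<kappa> - 1) *
         (SUP t\<in>{s1<..<s2}. integral (A t) (\<lambda>x. (u x t)\<^sup>2 * \<nu> x)) powr (\<kappa> - 1) *
         ((1 / wmeas \<omega> (ball x0 \<rho>)) *
            integral (ball x0 \<rho> \<times> {s1<..<s2}) (\<lambda>(x, t). (norm (Du x t))\<^sup>2 * \<omega> x))"
proof -
  have weights: "weight \<nu>" "weight \<omega>" using B12q by (auto simp: B12q_def)
  have "weight \<upsilon> \<and> weighted_interpolation x0 \<rho> \<kappa> \<gamma>1 \<nu> \<omega> \<upsilon>" if "\<upsilon> \<in> {\<nu>, \<omega>}" for \<upsilon>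
    using that weights interpolation unfolding weighted_interpolation_def by blast
  then show ?thesis
    using A_open E_def E_sub u open_imp_sets_lebesgue[OF E_open]
    by (intro ballI parabolic_interpolation[OF rho kappa(1) weights])
      (auto intro: open_imp_sets_lebesgue)
qed

end
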